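(* Let $\mathbb{F}$ be a field and let $H\le\mathrm{GL}(n,\mathbb{F})$ be unipotent-by-abelian. Then $gh-hg\in\mathrm{Rad}\langle H\rangle_{\mathbb{F}}$ for all $g,h\in H$.
   Context: A group $H\le\mathrm{GL}(n,\mathbb{F})$ is unipotent-by-abelian if it has a unipotent normal subgroup with abelian quotient. $\langle H\rangle_{\mathbb{F}}$ denotes the $\mathbb{F}$-enveloping algebra of $H$ (the $\mathbb{F}$-subalgebra of $\mathrm{Mat}(n,\mathbb{F})$ generated by $H$), and $\mathrm{Rad}$ denotes its Jacobson radical. *)

theory Defs
  imports "Jordan_Normal_Form.Matrix"
begin

definition GL_subgroup :: "nat \<Rightarrow> 'a::field mat set \<Rightarrow> bool" where
  "GL_subgroup n H \<longleftrightarrow> H \<subseteq> carrier_mat n n \<and> (\<forall>h\<in>H. invertible_mat h)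
     \<and> 1\<^sub>m n \<in> H \<and> (\<forall>g\<in>H. \<forall>h\<in>H. g * h \<in> H)
     \<and> (\<forall>g\<in>H. \<exists>g'\<in>H. g * g' = 1\<^sub>m n \<and> g' * g = 1\<^sub>m n)"

definition subgroup_of :: "nat \<Rightarrow> 'a::field mat set \<Rightarrow> 'a mat set \<Rightarrow> bool" where
  "subgroup_of n U H \<longleftrightarrow> U \<subseteq> H \<and> GL_subgroup n U"

definition normal_subgroup_of :: "nat \<Rightarrow> 'a::field mat set \<Rightarrow> 'a mat set \<Rightarrow> bool" where
  "normal_subgroup_of n U H \<longleftrightarrow> subgroup_of n U H \<and>
     (\<forall>g\<in>H. (\<lambda>u. g * u) ` U = (\<lambda>u. u * g) ` U)"

definition unipotent_mat :: "nat \<Rightarrow> 'a::field mat \<Rightarrow> bool" where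
  "unipotent_mat n u \<longleftrightarrow> (\<exists>k. (u - 1\<^sub>m n) ^\<^sub>m k = 0\<^sub>m n n)"

text \<open>H is unipotent-by-abelian: it has a unipotent normal subgroup U with H/U abelian,
  i.e. the cosets gU and hU commute: (gh)U = (hg)U for all g, h in H.\<close>
definition unipotent_by_abelian :: "nat \<Rightarrow> 'a::field mat set \<Rightarrow> bool" where
  "unipotent_by_abelian n H \<longleftrightarrow> (\<exists>U. normal_subgroup_of n U H \<and> (\<forall>u\<in>U. unipotent_mat n u)
     \<and> (\<forall>g\<in>H. \<forall>h\<in>H. (\<lambda>u. g * h * u) ` U = (\<lambda>u. h * g * u) ` U))"

inductive_set env_alg :: "nat \<Rightarrow> 'a::field mat set \<Rightarrow> 'a mat set" for n H where
  gen: "h \<in> H \<Longrightarrow> h \<in> env_alg n H"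
| zero: "0\<^sub>m n n \<in> env_alg n H"
| one: "1\<^sub>m n \<in> env_alg n H"
| add: "a \<in> env_alg n H \<Longrightarrow> b \<in> env_alg n H \<Longrightarrow> a + b \<in> env_alg n H"
| smult: "a \<in> env_alg n H \<Longrightarrow> c \<cdot>\<^sub>m a \<in> env_alg n H"
| mult: "a \<in> env_alg n H \<Longrightarrow> b \<in> env_alg n H \<Longrightarrow> a * b \<in> env_alg n H"

definition left_ideal :: "nat \<Rightarrow> 'a::field mat set \<Rightarrow> 'a mat set \<Rightarrow> bool" where
  "left_ideal n A L \<longleftrightarrow> L \<subseteq> A \<and> 0\<^sub>m n n \<in> L \<and> (\<forall>x\<in>L. \<forall>y\<in>L. x + y \<in> L)
     \<and> (\<forall>x\<in>L. - x \<in> L) \<and> (\<forall>a\<in>A. \<forall>x\<in>L. a * x \<in> L)"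

definition maximal_left_ideal :: "nat \<Rightarrow> 'a::field mat set \<Rightarrow> 'a mat set \<Rightarrow> bool" where
  "maximal_left_ideal n A L \<longleftrightarrow> left_ideal n A L \<and> L \<noteq> A \<and>
     (\<forall>L'. left_ideal n A L' \<and> L \<subseteq> L' \<longrightarrow> L' = L \<or> L' = A)"

definition jacobson_rad :: "nat \<Rightarrow> 'a::field mat set \<Rightarrow> 'a mat set" where
  "jacobson_rad n A = {x \<in> A. \<forall>L. maximal_left_ideal n A L \<longrightarrow> x \<in> L}"

end

theory Submission
  imports Defs "Jordan_Normal_Form.Char_Poly" "HOL-Algebra.Algebraic_Closure_Type"
begin

text \<open>
  Let \<open>U\<close> be the unipotent normal subgroup with abelian quotient. Then \<open>g h = h g u\<close> for some
  \<open>u \<in> U\<close>, so \<open>g h - h g = h g (u - 1)\<close>, and it suffices that \<open>a (u - 1)\<close> is nilpotent for every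
  \<open>a\<close> in the enveloping algebra \<open>A\<close>: an element \<open>x\<close> all of whose left multiples are nilpotent
  lies in every maximal left ideal \<open>L\<close>, since otherwise \<open>1 = l + a x\<close> with \<open>l \<in> L\<close> invertible.

  Nilpotency rests on Kolchin's theorem: every product of \<open>n\<close> factors \<open>v - 1\<close> with \<open>v \<in> U\<close>
  vanishes. Over the algebraic closure this follows by induction on \<open>n\<close> from a common fixed
  vector of the transposed monoid, which comes from Burnside's argument: if the span of \<open>U\<close>
  acted irreducibly, a nonzero element of minimal rank in it would have rank one, and the
  vanishing of the traces \<open>tr (s (v - 1))\<close> would force \<open>v = 1\<close>. Since \<open>U\<close> is normal, the
  matrices annihilated by all products \<open>(v\<^sub>1 - 1) \<cdots> (v\<^sub>j - 1)\<close> are stable under left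
  multiplication by \<open>A\<close>, and \<open>v - 1\<close> moves them one step down; hence \<open>(a (v - 1))\<^sup>n = 0\<close>.
\<close>

no_notation fps_nth (infixl \<open>$\<close> 75) \<comment> \<open>clashes with vector indexing\<close>

declare minus_carrier_mat[simp]

fun mat_list_prod :: "nat \<Rightarrow> 'a::semiring_1 mat list \<Rightarrow> 'a mat" where
  "mat_list_prod n [] = 1\<^sub>m n"
| "mat_list_prod n (A # As) = A * mat_list_prod n As"

lemma mat_list_prod_carrier: "set As \<subseteq> carrier_mat n n \<Longrightarrow> mat_list_prod n As \<in> carrier_mat n n"
  by (induction As) auto

lemma mat_list_prod_snoc:
  assumes "set As \<subseteq> carrier_mat n n" "B \<in> carrier_mat n n"
  shows "mat_list_prod n (As @ [B]) = mat_list_prod n As * B"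
  using assms
proof (induction As)
  case (Cons A As)
  have "A \<in> carrier_mat n n" "mat_list_prod n As \<in> carrier_mat n n"
    using Cons.prems mat_list_prod_carrier[of As n] by auto
  then show ?case using Cons assoc_mult_mat[of A n n _ n B n] by simp
qed simp

definition mat_trace :: "'a::comm_ring_1 mat \<Rightarrow> 'a" where
  "mat_trace A = (\<Sum>i<dim_row A. A $$ (i,i))"

lemma mat_trace_mult_comm:
  fixes E :: "'a::comm_ring_1 mat"
  assumes "E \<in> carrier_mat n k" "Y \<in> carrier_mat k n"
  shows "mat_trace (E * Y) = mat_trace (Y * E)"
proof -
  have "mat_trace (E * Y) = (\<Sum>i<n. \<Sum>j<k. E $$ (i,j) * Y $$ (j,i))"
    using assms by (simp add: mat_trace_def scalar_prod_def atLeast0LessThan)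
  also have "\<dots> = (\<Sum>j<k. \<Sum>i<n. Y $$ (j,i) * E $$ (i,j))"
    by (subst sum.swap) (simp add: mult.commute)
  also have "\<dots> = mat_trace (Y * E)"
    using assms by (simp add: mat_trace_def scalar_prod_def atLeast0LessThan)
  finally show ?thesis .
qed

lemma mat_trace_add: "A \<in> carrier_mat n n \<Longrightarrow> B \<in> carrier_mat n n \<Longrightarrow> mat_trace (A + B) = mat_trace A + mat_trace B"
  by (simp add: mat_trace_def sum.distrib)

lemma mat_trace_minus: "A \<in> carrier_mat n n \<Longrightarrow> B \<in> carrier_mat n n \<Longrightarrow> mat_trace (A - B) = mat_trace A - mat_trace B"
  by (simp add: mat_trace_def sum_subtractf)

lemma mat_trace_smult: "A \<in> carrier_mat n n \<Longrightarrow> mat_trace (c \<cdot>\<^sub>m A) = c * mat_trace A"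
  by (simp add: mat_trace_def sum_distrib_left)

lemma det_pow_mat:
  assumes "A \<in> carrier_mat n n"
  shows "det (A ^\<^sub>m j) = det A ^ j"
proof (induction j)
  case (Suc j)
  then show ?case using det_mult[OF pow_carrier_mat[OF assms] assms] by (simp add: mult.commute)
qed simp

lemma zero_mat_mult_vec[simp]:
  fixes v :: "'a::comm_ring_1 vec"
  shows "v \<in> carrier_vec n \<Longrightarrow> 0\<^sub>m nr n *\<^sub>v v = 0\<^sub>v nr"
  by (intro eq_vecI) (auto simp: scalar_prod_def)

lemma smult_mat_mult_vec:
  fixes A :: "'a::comm_ring_1 mat"
  shows "A \<in> carrier_mat nr n \<Longrightarrow> v \<in> carrier_vec n \<Longrightarrow> (c \<cdot>\<^sub>m A) *\<^sub>v v = c \<cdot>\<^sub>v (A *\<^sub>v v)"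
  by (intro eq_vecI) (auto simp: scalar_prod_def sum_distrib_left mult.assoc)

lemma assoc_mult_mat_dims:
  fixes A :: "'a::semiring_0 mat"
  shows "dim_col A = dim_row B \<Longrightarrow> dim_col B = dim_row C \<Longrightarrow> A * B * C = A * (B * C)"
  by (rule assoc_mult_mat[of A "dim_row A" "dim_col A" B "dim_col B" C "dim_col C"]) auto

lemma assoc_mult_mat_vec_dims:
  fixes A :: "'a::semiring_0 mat"
  shows "dim_col A = dim_row B \<Longrightarrow> dim_col B = dim_vec v \<Longrightarrow> A * B *\<^sub>v v = A *\<^sub>v (B *\<^sub>v v)"
  by (rule assoc_mult_mat_vec[of A "dim_row A" "dim_col A" B "dim_col B" v]) auto

definition inj_mat :: "'a::field mat \<Rightarrow> bool" where
  "inj_mat E \<longleftrightarrow> (\<forall>z\<in>carrier_vec (dim_col E). E *\<^sub>v z = 0\<^sub>v (dim_row E) \<longrightarrow> z = 0\<^sub>v (dim_col E))"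

definition vec_subspace :: "nat \<Rightarrow> 'a::field vec set \<Rightarrow> bool" where
  "vec_subspace n W \<longleftrightarrow> W \<subseteq> carrier_vec n \<and> 0\<^sub>v n \<in> W \<and> (\<forall>x\<in>W. \<forall>y\<in>W. x + y \<in> W)
     \<and> (\<forall>c. \<forall>x\<in>W. c \<cdot>\<^sub>v x \<in> W)"

lemma inj_matD:
  assumes "inj_mat E" "E \<in> carrier_mat n k" "z \<in> carrier_vec k" "E *\<^sub>v z = 0\<^sub>v n"
  shows "z = 0\<^sub>v k"
  using assms unfolding inj_mat_def by auto

lemma mult_unit_vec_col:
  fixes A :: "'a::comm_ring_1 mat"
  assumes "A \<in> carrier_mat nr n" "j < n"
  shows "A *\<^sub>v unit_vec n j = col A j"
proof (rule eq_vecI)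
  fix i assume "i < dim_vec (col A j)"
  then show "(A *\<^sub>v unit_vec n j) $ i = col A j $ i"
    using assms scalar_prod_right_unit[of j n "row A i"] by simp
qed (use assms in simp)

lemma mat_eqI_mult_unit_vec:
  fixes A :: "'a::comm_ring_1 mat"
  assumes "A \<in> carrier_mat n m" "B \<in> carrier_mat n m" "\<And>j. j < m \<Longrightarrow> A *\<^sub>v unit_vec m j = B *\<^sub>v unit_vec m j"
  shows "A = B"
proof (rule eq_matI)
  fix i j assume ij: "i < dim_row B" "j < dim_col B"
  then have "(A *\<^sub>v unit_vec m j) $ i = (B *\<^sub>v unit_vec m j) $ i" using assms(2,3) by simp
  then show "A $$ (i,j) = B $$ (i,j)" using assms(1,2) ij by (simp add: mult_unit_vec_col)
qed (use assms in auto)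

lemma inj_mat_mult_eq_zero:
  assumes "inj_mat E" "E \<in> carrier_mat n k" "Z \<in> carrier_mat k m" "E * Z = 0\<^sub>m n m"
  shows "Z = 0\<^sub>m k m"
proof (rule mat_eqI_mult_unit_vec[OF assms(3)])
  fix j assume j: "j < m"
  have "E *\<^sub>v (Z *\<^sub>v unit_vec m j) = (E * Z) *\<^sub>v unit_vec m j"
    using assms(2,3) by (simp add: assoc_mult_mat_vec)
  also have "\<dots> = 0\<^sub>v n" using assms j by (simp add: mult_unit_vec_col)
  finally show "Z *\<^sub>v unit_vec m j = 0\<^sub>m k m *\<^sub>v unit_vec m j"
    using inj_matD[OF assms(1,2)] assms(3) j by (simp add: mult_unit_vec_col)
qed simp

lemma mat_eq_if_minus_eq_zero:
  fixes A :: "'a::ab_group_add mat"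
  assumes A: "A \<in> carrier_mat n m" and B: "B \<in> carrier_mat n m" and AB: "A - B = 0\<^sub>m n m"
  shows "A = B"
proof (rule eq_matI)
  fix i j assume ij: "i < dim_row B" "j < dim_col B"
  then have "(A - B) $$ (i,j) = 0" using AB B by simp
  then show "A $$ (i,j) = B $$ (i,j)" using ij A B by simp
qed (use A B in auto)

lemma inj_mat_mult_cancel:
  assumes "inj_mat E" "E \<in> carrier_mat n k" "Z \<in> carrier_mat k m" "Z' \<in> carrier_mat k m"
    and "E * Z = E * Z'"
  shows "Z = Z'"
proof -
  have "E * (Z - Z') = 0\<^sub>m n m"
    using assms by (simp add: mult_minus_distrib_mat)
  then have "Z - Z' = 0\<^sub>m k m"
    using inj_mat_mult_eq_zero[OF assms(1,2) minus_carrier_mat[OF assms(4)]] by simp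
  then show ?thesis by (rule mat_eq_if_minus_eq_zero[OF assms(3,4)])
qed

lemma inj_mat_dim_le:
  assumes E: "E \<in> carrier_mat n k" and inj: "inj_mat E"
  shows "k \<le> n"
proof (rule ccontr)
  assume "\<not> k \<le> n"
  then have kn: "n < k" by simp
  define c where "c = (\<lambda>i. if i < n then row E i else 0\<^sub>v k)"
  \<comment> \<open>pad \<open>E\<close> with zero rows to a singular square matrix\<close>
  define E' where "E' = mat\<^sub>r k k (\<lambda>i. if i = k - 1 then 0\<^sub>v k else c i)"
  have c: "c \<in> {0..<k} \<rightarrow> carrier_vec k" using E unfolding c_def by auto
  have "det E' = 0" unfolding E'_def by (rule det_row_0) (use kn c in auto)
  moreover have E'c: "E' \<in> carrier_mat k k" unfolding E'_def by auto
  ultimately obtain v where v: "v \<in> carrier_vec k" "v \<noteq> 0\<^sub>v k" "E' *\<^sub>v v = 0\<^sub>v k"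
    using det_0_iff_vec_prod_zero_field by blast
  have "E *\<^sub>v v = 0\<^sub>v n"
  proof (rule eq_vecI)
    fix i assume "i < dim_vec (0\<^sub>v n :: 'a vec)"
    then have i: "i < n" by simp
    have "row E' i = row E i"
      unfolding E'_def c_def using E i kn by (subst row_mat_of_row_fun) auto
    then show "(E *\<^sub>v v) $ i = 0\<^sub>v n $ i"
      using arg_cong[OF v(3), of "\<lambda>x. x $ i"] i kn E E'c by simp
  qed (use E in simp)
  then show False using inj_matD[OF inj E v(1)] v(2) by simp
qed

lemma append_col_mult_vec:
  fixes E :: "'a::field mat"
  assumes E: "E \<in> carrier_mat n k" and w: "w \<in> carrier_vec n" and z: "z \<in> carrier_vec (Suc k)"
  shows "mat n (Suc k) (\<lambda>(i,j). if j < k then E $$ (i,j) else w $ i) *\<^sub>v z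
     = E *\<^sub>v vec k (\<lambda>i. z $ i) + z $ k \<cdot>\<^sub>v w"
proof (rule eq_vecI)
  fix i assume "i < dim_vec (E *\<^sub>v vec k (\<lambda>i. z $ i) + z $ k \<cdot>\<^sub>v w)"
  then have i: "i < n" using E w by simp
  have "(mat n (Suc k) (\<lambda>(i,j). if j < k then E $$ (i,j) else w $ i) *\<^sub>v z) $ i
      = (\<Sum>j<Suc k. (if j < k then E $$ (i,j) else w $ i) * z $ j)"
    using i z by (simp add: scalar_prod_def atLeast0LessThan)
  also have "\<dots> = (\<Sum>j<k. E $$ (i,j) * z $ j) + w $ i * z $ k"
    by (simp add: lessThan_Suc add.commute)
  also have "\<dots> = (E *\<^sub>v vec k (\<lambda>i. z $ i) + z $ k \<cdot>\<^sub>v w) $ i"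
    using i E w by (simp add: scalar_prod_def atLeast0LessThan mult.commute[of "z $ k"])
  finally show "(mat n (Suc k) (\<lambda>(i,j). if j < k then E $$ (i,j) else w $ i) *\<^sub>v z) $ i
      = (E *\<^sub>v vec k (\<lambda>i. z $ i) + z $ k \<cdot>\<^sub>v w) $ i" .
qed (use E w in simp)

lemma inj_mat_append_col:
  assumes E: "E \<in> carrier_mat n k" "inj_mat E"
    and w: "w \<in> carrier_vec n" "w \<notin> (\<lambda>z. E *\<^sub>v z) ` carrier_vec k"
  shows "inj_mat (mat n (Suc k) (\<lambda>(i,j). if j < k then E $$ (i,j) else w $ i))"
  unfolding inj_mat_def
proof (intro ballI impI)
  let ?E' = "mat n (Suc k) (\<lambda>(i,j). if j < k then E $$ (i,j) else w $ i)"
  fix z assume "z \<in> carrier_vec (dim_col ?E')" and z0: "?E' *\<^sub>v z = 0\<^sub>v (dim_row ?E')"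
  then have z: "z \<in> carrier_vec (Suc k)" by simp
  define y where "y = vec k (\<lambda>i. z $ i)"
  have y: "y \<in> carrier_vec k" unfolding y_def by simp
  have eq: "E *\<^sub>v y + z $ k \<cdot>\<^sub>v w = 0\<^sub>v n"
    using z0 append_col_mult_vec[OF E(1) w(1) z] unfolding y_def by simp
  have zk: "z $ k = 0"
  proof (rule ccontr)
    assume nz: "z $ k \<noteq> 0"
    have "w = E *\<^sub>v ((- 1 / z $ k) \<cdot>\<^sub>v y)"
    proof (rule eq_vecI)
      fix i assume "i < dim_vec (E *\<^sub>v ((- 1 / z $ k) \<cdot>\<^sub>v y))"
      then have i: "i < n" using E by simp
      have "(E *\<^sub>v y) $ i + z $ k * w $ i = 0"
        using arg_cong[OF eq, of "\<lambda>v. v $ i"] i E w by simp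
      moreover have "b = - 1 / c * a" if "a + c * b = 0" "c \<noteq> 0" for a b c :: 'a
        using that by (simp add: field_simps eq_neg_iff_add_eq_0 add.commute)
      ultimately have "w $ i = - 1 / z $ k * (E *\<^sub>v y) $ i" using nz by blast
      then show "w $ i = (E *\<^sub>v ((- 1 / z $ k) \<cdot>\<^sub>v y)) $ i"
        using i E y by (simp add: mult_mat_vec)
    qed (use E w in simp)
    moreover have "(- 1 / z $ k) \<cdot>\<^sub>v y \<in> carrier_vec k" using y by simp
    ultimately show False using w(2) by blast
  qed
  moreover have "0 \<cdot>\<^sub>v w = 0\<^sub>v n" using w(1) by (intro eq_vecI) auto
  ultimately have "E *\<^sub>v y = 0\<^sub>v n" using eq E y by simp
  then have y0: "y = 0\<^sub>v k" using inj_matD[OF E(2,1) y] by simp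
  show "z = 0\<^sub>v (dim_col ?E')"
  proof (rule eq_vecI)
    fix i assume "i < dim_vec (0\<^sub>v (dim_col ?E') :: 'a vec)"
    then have "i < Suc k" by simp
    then show "z $ i = 0\<^sub>v (dim_col ?E') $ i"
      using zk arg_cong[OF y0, of "\<lambda>v. v $ i"] unfolding y_def by (cases "i < k") (auto simp: less_Suc_eq)
  qed (use z in simp)
qed

lemma vec_subspace_basis:
  fixes W :: "'a::field vec set"
  assumes W: "vec_subspace n W"
  shows "\<exists>k E. E \<in> carrier_mat n k \<and> inj_mat E \<and> (\<lambda>z. E *\<^sub>v z) ` carrier_vec k = W"
proof -
  define S where "S = {k. \<exists>E\<in>carrier_mat n k. inj_mat E \<and> (\<lambda>z. E *\<^sub>v z) ` carrier_vec k \<subseteq> W}"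
  have "0 \<in> S"
    using W unfolding S_def inj_mat_def vec_subspace_def
    by (intro CollectI bexI[of _ "0\<^sub>m n 0"]) (auto simp: scalar_prod_def intro!: eq_vecI)
  moreover have "S \<subseteq> {..n}" unfolding S_def using inj_mat_dim_le by auto
  then have "finite S" using finite_subset by blast
  ultimately have k: "Max S \<in> S" "\<And>k'. k' \<in> S \<Longrightarrow> k' \<le> Max S"
    by (auto intro: Max_in)
  define k where "k = Max S"
  obtain E where E: "E \<in> carrier_mat n k" "inj_mat E" "(\<lambda>z. E *\<^sub>v z) ` carrier_vec k \<subseteq> W"
    using k(1) unfolding S_def k_def by blast
  have "W \<subseteq> (\<lambda>z. E *\<^sub>v z) ` carrier_vec k"
  proof
    fix w assume w: "w \<in> W"
    show "w \<in> (\<lambda>z. E *\<^sub>v z) ` carrier_vec k"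
    proof (rule ccontr)
      assume w': "w \<notin> (\<lambda>z. E *\<^sub>v z) ` carrier_vec k"
      have wc: "w \<in> carrier_vec n" using w W unfolding vec_subspace_def by auto
      define E' where "E' = mat n (Suc k) (\<lambda>(i,j). if j < k then E $$ (i,j) else w $ i)"
      have "E' *\<^sub>v z \<in> W" if z: "z \<in> carrier_vec (Suc k)" for z
      proof -
        have "E *\<^sub>v vec k (\<lambda>i. z $ i) \<in> W" using E(3) by auto
        then show ?thesis
          using W w append_col_mult_vec[OF E(1) wc z] unfolding E'_def vec_subspace_def by simp
      qed
      then have "Suc k \<in> S"
        unfolding S_def using inj_mat_append_col[OF E(1,2) wc w'] unfolding E'_def
        by (intro CollectI bexI[of _ E']) (auto simp: E'_def)
      then show False using k(2) unfolding k_def by fastforce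
    qed
  qed
  then show ?thesis using E by blast
qed

lemma factor_through_range:
  fixes E :: "'a::field mat"
  assumes E: "E \<in> carrier_mat n k" and S: "S \<in> carrier_mat n m"
    and cols: "\<forall>j<m. col S j \<in> (\<lambda>z. E *\<^sub>v z) ` carrier_vec k"
  shows "\<exists>Y\<in>carrier_mat k m. S = E * Y"
proof -
  have "\<forall>j. \<exists>z. j < m \<longrightarrow> z \<in> carrier_vec k \<and> col S j = E *\<^sub>v z" using cols by blast
  from choice[OF this] obtain f where f: "\<And>j. j < m \<Longrightarrow> f j \<in> carrier_vec k \<and> col S j = E *\<^sub>v f j"
    by blast
  define Y where "Y = mat k m (\<lambda>(i,j). f j $ i)"
  have Y: "Y \<in> carrier_mat k m" unfolding Y_def by simp
  have "Y *\<^sub>v unit_vec m j = f j" if "j < m" for j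
    using f[OF that] that unfolding mult_unit_vec_col[OF Y that] Y_def by (intro eq_vecI) auto
  then have "S = E * Y"
    using E S Y f by (intro mat_eqI_mult_unit_vec[of _ n m]) (auto simp: mult_unit_vec_col simp flip: assoc_mult_mat_vec)
  then show ?thesis using Y by blast
qed

lemma vec_subspace_mat_range:
  assumes A: "A \<in> carrier_mat n m"
  shows "vec_subspace n ((\<lambda>z. A *\<^sub>v z) ` carrier_vec m)"
  unfolding vec_subspace_def
proof (intro conjI ballI allI)
  show "0\<^sub>v n \<in> (\<lambda>z. A *\<^sub>v z) ` carrier_vec m"
    using A by (intro image_eqI[of _ _ "0\<^sub>v m"]) auto
  fix x y assume "x \<in> (\<lambda>z. A *\<^sub>v z) ` carrier_vec m" "y \<in> (\<lambda>z. A *\<^sub>v z) ` carrier_vec m"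
  then obtain a b where "a \<in> carrier_vec m" "b \<in> carrier_vec m" "x = A *\<^sub>v a" "y = A *\<^sub>v b" by auto
  then show "x + y \<in> (\<lambda>z. A *\<^sub>v z) ` carrier_vec m"
    using A by (intro image_eqI[of _ _ "a + b"]) (auto simp: mult_add_distrib_mat_vec)
next
  fix c x assume "x \<in> (\<lambda>z. A *\<^sub>v z) ` carrier_vec m"
  then obtain a where "a \<in> carrier_vec m" "x = A *\<^sub>v a" by auto
  then show "c \<cdot>\<^sub>v x \<in> (\<lambda>z. A *\<^sub>v z) ` carrier_vec m"
    using A by (intro image_eqI[of _ _ "c \<cdot>\<^sub>v a"]) (auto simp: mult_mat_vec)
qed (use A in auto)

lemma inj_mat_square_range:
  fixes A :: "'a::field mat"
  assumes A: "A \<in> carrier_mat n n" and inj: "inj_mat A"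
  shows "(\<lambda>z. A *\<^sub>v z) ` carrier_vec n = carrier_vec n"
proof -
  have "det A \<noteq> 0"
    using det_0_iff_vec_prod_zero_field[OF A] inj_matD[OF inj A] by blast
  from det_non_zero_imp_unit[OF A this, of "()"]
  obtain B where B: "B \<in> carrier_mat n n" "A * B = 1\<^sub>m n"
    unfolding Units_def ring_mat_def by auto
  have "w = A *\<^sub>v (B *\<^sub>v w)" if "w \<in> carrier_vec n" for w
    using A B that by (simp flip: assoc_mult_mat_vec)
  then show ?thesis using A B by force
qed

lemma range_ne_carrier_if_det_zero:
  fixes A :: "'a::field mat"
  assumes A: "A \<in> carrier_mat n n" and "det A = 0"
  shows "(\<lambda>z. A *\<^sub>v z) ` carrier_vec n \<noteq> carrier_vec n"
proof
  assume "(\<lambda>z. A *\<^sub>v z) ` carrier_vec n = carrier_vec n"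
  then obtain B where B: "B \<in> carrier_mat n n" "1\<^sub>m n = A * B"
    using factor_through_range[OF A one_carrier_mat[of n]] by auto
  have "1 = det A * det B" using det_mult[OF A B(1)] unfolding B(2)[symmetric] by simp
  then show False using assms(2) by simp
qed

lemma proper_subspace_basis:
  fixes W :: "'a::field vec set"
  assumes "vec_subspace n W" "W \<noteq> carrier_vec n"
  shows "\<exists>k<n. \<exists>E\<in>carrier_mat n k. inj_mat E \<and> (\<lambda>z. E *\<^sub>v z) ` carrier_vec k = W"
proof -
  obtain k E where E: "E \<in> carrier_mat n k" "inj_mat E" "(\<lambda>z. E *\<^sub>v z) ` carrier_vec k = W"
    using vec_subspace_basis[OF assms(1)] by blast
  have "k \<le> n" using inj_mat_dim_le[OF E(1,2)] .
  moreover have "k \<noteq> n" using inj_mat_square_range[of E n] E assms(2) by auto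
  ultimately have "k < n" by simp
  then show ?thesis using E by blast
qed

lemma factor_through_smaller_dim:
  fixes A :: "'a::field mat"
  assumes A: "A \<in> carrier_mat n n" and "det A = 0"
  shows "\<exists>k<n. \<exists>E\<in>carrier_mat n k. \<exists>Y\<in>carrier_mat k n. inj_mat E \<and> A = E * Y"
proof -
  let ?W = "(\<lambda>z. A *\<^sub>v z) ` carrier_vec n"
  obtain k E where k: "k < n" and E: "E \<in> carrier_mat n k" "inj_mat E" "(\<lambda>z. E *\<^sub>v z) ` carrier_vec k = ?W"
    using proper_subspace_basis[OF vec_subspace_mat_range[OF A] range_ne_carrier_if_det_zero[OF assms]]
    by blast
  have "col A j \<in> ?W" if "j < n" for j
    using A mult_unit_vec_col[OF A that] by (metis image_eqI unit_vec_carrier)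
  then obtain Y where "Y \<in> carrier_mat k n" "A = E * Y"
    using factor_through_range[OF E(1) A, unfolded E(3)] by blast
  then show ?thesis using k E(1,2) by blast
qed

lemma mult_pow_mat_intertwine:
  fixes E :: "'a::field mat"
  assumes E: "E \<in> carrier_mat n k" and N: "N \<in> carrier_mat n n" and M: "M \<in> carrier_mat k k"
    and EM: "E * M = N * E"
  shows "E * M ^\<^sub>m i = N ^\<^sub>m i * E"
proof (induction i)
  case (Suc i)
  have "E * M ^\<^sub>m Suc i = (E * M ^\<^sub>m i) * M"
    using E M by (simp add: assoc_mult_mat[of E n k "M ^\<^sub>m i" k M k])
  also have "\<dots> = N ^\<^sub>m i * (E * M)"
    using Suc E M N by (simp add: assoc_mult_mat[of "N ^\<^sub>m i" n n E k M k])
  also have "\<dots> = N ^\<^sub>m Suc i * E"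
    using EM E N by (simp add: assoc_mult_mat[of "N ^\<^sub>m i" n n N n E k])
  finally show ?case .
qed (use E M N in simp)

lemma mat_trace_nilpotent:
  fixes N :: "'a::field mat"
  assumes "N \<in> carrier_mat n n" "N ^\<^sub>m j = 0\<^sub>m n n"
  shows "mat_trace N = 0"
  using assms
proof (induction n arbitrary: N rule: less_induct)
  case (less n)
  show ?case
  proof (cases "n = 0")
    case True
    then show ?thesis using less.prems by (simp add: mat_trace_def)
  next
    case False
    then have "det N ^ j = 0" using det_pow_mat[OF less.prems(1), of j] less.prems(2) by simp
    then obtain k E Y where k: "k < n" and E: "E \<in> carrier_mat n k" "inj_mat E"
      and Y: "Y \<in> carrier_mat k n" and N: "N = E * Y"
      using factor_through_smaller_dim[OF less.prems(1)] by auto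
    \<comment> \<open>\<open>Y * E\<close> is the map induced by \<open>N\<close> on its range\<close>
    have "E * (Y * E) = N * E" using E Y N by (simp add: assoc_mult_mat)
    then have "E * (Y * E) ^\<^sub>m j = 0\<^sub>m n k"
      using mult_pow_mat_intertwine[OF E(1) less.prems(1)] less.prems(2) E Y by simp
    then have "(Y * E) ^\<^sub>m j = 0\<^sub>m k k" using inj_mat_mult_eq_zero[OF E(2,1)] E Y by simp
    then have "mat_trace (Y * E) = 0" using less.IH[OF k] E Y by simp
    then show ?thesis using N mat_trace_mult_comm[OF E(1) Y] by simp
  qed
qed

definition unipotent_monoid :: "nat \<Rightarrow> 'a::field mat set \<Rightarrow> bool" where
  "unipotent_monoid n U \<longleftrightarrow> U \<subseteq> carrier_mat n n \<and> 1\<^sub>m n \<in> U \<and> (\<forall>a\<in>U. \<forall>b\<in>U. a * b \<in> U)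
     \<and> (\<forall>u\<in>U. unipotent_mat n u)"

lemma mat_trace_unipotent:
  fixes u :: "'a::field mat"
  assumes u: "u \<in> carrier_mat n n" and "unipotent_mat n u"
  shows "mat_trace u = of_nat n"
proof -
  obtain k where "(u - 1\<^sub>m n) ^\<^sub>m k = 0\<^sub>m n n" using assms(2) unfolding unipotent_mat_def by blast
  then have "mat_trace (u - 1\<^sub>m n) = 0"
    using mat_trace_nilpotent[OF minus_carrier_mat[OF one_carrier_mat]] by blast
  then show ?thesis using mat_trace_minus[OF u one_carrier_mat] by (simp add: mat_trace_def)
qed

inductive_set mat_span :: "nat \<Rightarrow> 'a::field mat set \<Rightarrow> 'a mat set" for n U where
  gen: "u \<in> U \<Longrightarrow> u \<in> mat_span n U"
| zero: "0\<^sub>m n n \<in> mat_span n U"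
| add: "a \<in> mat_span n U \<Longrightarrow> b \<in> mat_span n U \<Longrightarrow> a + b \<in> mat_span n U"
| smult: "a \<in> mat_span n U \<Longrightarrow> c \<cdot>\<^sub>m a \<in> mat_span n U"

lemma mat_span_carrier:
  assumes "U \<subseteq> carrier_mat n n" "a \<in> mat_span n U"
  shows "a \<in> carrier_mat n n"
  using assms(2) by induction (use assms(1) in auto)

lemma mat_span_mult:
  assumes U: "U \<subseteq> carrier_mat n n" "\<forall>u\<in>U. \<forall>v\<in>U. u * v \<in> U"
    and a: "a \<in> mat_span n U" and b: "b \<in> mat_span n U"
  shows "a * b \<in> mat_span n U"
proof -
  note carrier = mat_span_carrier[OF U(1)]
  have gen_mult: "u * b \<in> mat_span n U" if u: "u \<in> U" for u
    using b
  proof (induction rule: mat_span.induct)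
    case (add b1 b2)
    have "u * (b1 + b2) = u * b1 + u * b2"
      using u U add.hyps carrier by (meson mult_add_distrib_mat subsetD)
    then show ?case using add.IH mat_span.add by metis
  next
    case (smult b c)
    have "u * (c \<cdot>\<^sub>m b) = c \<cdot>\<^sub>m (u * b)"
      using u U smult.hyps carrier by (meson mult_smult_distrib subsetD)
    then show ?case using smult.IH mat_span.smult by metis
  next
    case zero
    have "u * 0\<^sub>m n n = 0\<^sub>m n n" using u U by auto
    then show ?case using mat_span.zero by metis
  qed (use u U in \<open>auto intro: mat_span.intros\<close>)
  show ?thesis
    using a
  proof (induction rule: mat_span.induct)
    case (add a1 a2)
    have "(a1 + a2) * b = a1 * b + a2 * b" using b add.hyps carrier by (meson add_mult_distrib_mat)
    then show ?case using add.IH mat_span.add by metis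
  next
    case (smult a c)
    have "(c \<cdot>\<^sub>m a) * b = c \<cdot>\<^sub>m (a * b)" using b smult.hyps carrier by (meson mult_smult_assoc_mat)
    then show ?case using smult.IH mat_span.smult by metis
  next
    case zero
    have "0\<^sub>m n n * b = 0\<^sub>m n n" using carrier[OF b] by simp
    then show ?case using mat_span.zero by metis
  qed (use gen_mult in auto)
qed

lemma mat_trace_span_mult_minus_one:
  assumes U: "unipotent_monoid n U" and a: "a \<in> mat_span n U" and u: "u \<in> U"
  shows "mat_trace (a * (u - 1\<^sub>m n)) = 0"
  using a
proof (induction rule: mat_span.induct)
  case (gen s)
  have s: "s \<in> carrier_mat n n" "unipotent_mat n s" and su: "s * u \<in> carrier_mat n n" "unipotent_mat n (s * u)"
    and uc: "u \<in> carrier_mat n n"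
    using U gen u unfolding unipotent_monoid_def by auto
  have "s * (u - 1\<^sub>m n) = s * u - s" using s uc by (simp add: mult_minus_distrib_mat)
  then show ?case
    using mat_trace_minus[OF su(1) s(1)] mat_trace_unipotent[OF s] mat_trace_unipotent[OF su] by simp
next
  case zero
  then show ?case by (simp add: mat_trace_def)
next
  case (add a b)
  have ab: "a \<in> carrier_mat n n" "b \<in> carrier_mat n n" "u - 1\<^sub>m n \<in> carrier_mat n n"
    using add.hyps U u mat_span_carrier[of U n] unfolding unipotent_monoid_def by auto
  then show ?case
    using add.IH add_mult_distrib_mat[OF ab] mat_trace_add[of "a * (u - 1\<^sub>m n)" n] by simp
next
  case (smult a c)
  have a: "a \<in> carrier_mat n n" "u - 1\<^sub>m n \<in> carrier_mat n n"
    using smult.hyps U u mat_span_carrier[of U n] unfolding unipotent_monoid_def by auto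
  then show ?case
    using smult.IH mult_smult_assoc_mat[OF a] mat_trace_smult[of "a * (u - 1\<^sub>m n)" n] by simp
qed

text \<open>The matrix of \<open>u\<close> on the range of \<open>E\<close>; it is a junk value unless that range is
  \<open>u\<close>-invariant.\<close>

definition restrict_mat :: "'a::field mat \<Rightarrow> 'a mat \<Rightarrow> 'a mat" where
  "restrict_mat E u = (SOME M. M \<in> carrier_mat (dim_col E) (dim_col E) \<and> u * E = E * M)"

lemma restrict_mat:
  assumes E: "E \<in> carrier_mat n k" and u: "u \<in> carrier_mat n n"
    and inv: "\<forall>z\<in>carrier_vec k. u *\<^sub>v (E *\<^sub>v z) \<in> (\<lambda>z. E *\<^sub>v z) ` carrier_vec k"
  shows "restrict_mat E u \<in> carrier_mat k k" "u * E = E * restrict_mat E u"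
proof -
  have "col (u * E) j \<in> (\<lambda>z. E *\<^sub>v z) ` carrier_vec k" if "j < k" for j
    using col_mult2[OF u E that] mult_unit_vec_col[OF E that] inv unit_vec_carrier[of k j] by metis
  then have "\<exists>M. M \<in> carrier_mat k k \<and> u * E = E * M"
    using factor_through_range[OF E, of "u * E" k] E u by auto
  from someI_ex[OF this]
  show "restrict_mat E u \<in> carrier_mat k k" "u * E = E * restrict_mat E u"
    unfolding restrict_mat_def using E by auto
qed

lemma restrict_mat_minus_one:
  assumes E: "E \<in> carrier_mat n k" and u: "u \<in> carrier_mat n n"
    and inv: "\<forall>z\<in>carrier_vec k. u *\<^sub>v (E *\<^sub>v z) \<in> (\<lambda>z. E *\<^sub>v z) ` carrier_vec k"
  shows "(u - 1\<^sub>m n) * E = E * (restrict_mat E u - 1\<^sub>m k)"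
  using restrict_mat[OF assms] E u by (simp add: minus_mult_distrib_mat mult_minus_distrib_mat)

lemma unipotent_monoid_restrict:
  assumes U: "unipotent_monoid n U" and E: "E \<in> carrier_mat n k" "inj_mat E"
    and inv: "\<forall>u\<in>U. \<forall>z\<in>carrier_vec k. u *\<^sub>v (E *\<^sub>v z) \<in> (\<lambda>z. E *\<^sub>v z) ` carrier_vec k"
  shows "unipotent_monoid k (restrict_mat E ` U)"
proof -
  have Uc: "U \<subseteq> carrier_mat n n" and one: "1\<^sub>m n \<in> U" and mult: "\<forall>a\<in>U. \<forall>b\<in>U. a * b \<in> U"
    using U unfolding unipotent_monoid_def by auto
  have R: "restrict_mat E u \<in> carrier_mat k k" "u * E = E * restrict_mat E u" if "u \<in> U" for u
    using restrict_mat[OF E(1)] inv that Uc by blast+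
  note cancel = inj_mat_mult_cancel[OF E(2,1)]
  have "E * restrict_mat E (1\<^sub>m n) = E * 1\<^sub>m k" using R[OF one] E by simp
  then have R1: "restrict_mat E (1\<^sub>m n) = 1\<^sub>m k" using cancel R(1)[OF one] by auto
  have Rm: "restrict_mat E (a * b) = restrict_mat E a * restrict_mat E b" if ab: "a \<in> U" "b \<in> U" for a b
  proof -
    have abc: "a \<in> carrier_mat n n" "b \<in> carrier_mat n n" using ab Uc by auto
    have "E * restrict_mat E (a * b) = a * (b * E)"
      using R(2)[of "a * b"] mult ab abc E by (simp add: assoc_mult_mat[of a n n b n E k])
    also have "\<dots> = (a * E) * restrict_mat E b"
      using R[OF ab(2)] abc E by (simp add: assoc_mult_mat[of a n n E k])
    also have "\<dots> = E * (restrict_mat E a * restrict_mat E b)"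
      using R[OF ab(1)] R[OF ab(2)] E by (simp add: assoc_mult_mat[of E n k])
    finally show ?thesis using cancel R(1) mult ab by (metis mult_carrier_mat)
  qed
  have Ru: "unipotent_mat k (restrict_mat E u)" if u: "u \<in> U" for u
  proof -
    have uc: "u \<in> carrier_mat n n" using u Uc by auto
    obtain j where j: "(u - 1\<^sub>m n) ^\<^sub>m j = 0\<^sub>m n n"
      using U u unfolding unipotent_monoid_def unipotent_mat_def by blast
    have invu: "\<forall>z\<in>carrier_vec k. u *\<^sub>v (E *\<^sub>v z) \<in> (\<lambda>z. E *\<^sub>v z) ` carrier_vec k"
      using inv u by blast
    have "E * (restrict_mat E u - 1\<^sub>m k) ^\<^sub>m j = (u - 1\<^sub>m n) ^\<^sub>m j * E"
      using mult_pow_mat_intertwine[OF E(1) _ _ restrict_mat_minus_one[OF E(1) uc invu, symmetric]] uc R(1)[OF u]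
      by simp
    also have "\<dots> = 0\<^sub>m n k" using j E by simp
    finally have "(restrict_mat E u - 1\<^sub>m k) ^\<^sub>m j = 0\<^sub>m k k"
      using inj_mat_mult_eq_zero[OF E(2,1)] R(1)[OF u] by simp
    then show ?thesis unfolding unipotent_mat_def by blast
  qed
  have "restrict_mat E a * restrict_mat E b \<in> restrict_mat E ` U" if "a \<in> U" "b \<in> U" for a b
    using Rm[OF that] mult that by (metis image_eqI)
  then show ?thesis
    unfolding unipotent_monoid_def using R(1) R1 one Ru by (auto intro: image_eqI[of _ _ "1\<^sub>m n"])
qed

section \<open>Burnside's argument\<close>

definition acts_transitively :: "nat \<Rightarrow> 'a::field mat set \<Rightarrow> bool" where
  "acts_transitively n S \<longleftrightarrow> (\<forall>v\<in>carrier_vec n. v \<noteq> 0\<^sub>v n \<longrightarrow> (\<forall>w\<in>carrier_vec n. \<exists>a\<in>S. a *\<^sub>v v = w))"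

definition rank_at_most :: "nat \<Rightarrow> nat \<Rightarrow> 'a::field mat \<Rightarrow> bool" where
  "rank_at_most n r T \<longleftrightarrow> (\<exists>E\<in>carrier_mat n r. \<exists>Y\<in>carrier_mat r n. T = E * Y)"

lemma exists_singular_char_matrix:
  fixes M :: "'a::alg_closed_field mat"
  assumes M: "M \<in> carrier_mat r r" and r: "0 < r"
  shows "\<exists>c. det (char_matrix M c) = 0"
proof -
  have "Polynomial.degree (char_poly M) > 0" using degree_monic_char_poly[OF M] r by simp
  then obtain c where "poly (char_poly M) c = 0" using alg_closed_imp_poly_has_root by blast
  then show ?thesis using eigenvalue_root_char_poly[OF M] eigenvalue_det[OF M] by blast
qed

lemma minimal_rank_sandwich:
  fixes T :: "'a::alg_closed_field mat"
  assumes U: "U \<subseteq> carrier_mat n n" "\<forall>u\<in>U. \<forall>v\<in>U. u * v \<in> U"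
    and T: "T \<in> mat_span n U" "rank_at_most n r T" "0 < r"
    and min: "\<And>T' k. T' \<in> mat_span n U \<Longrightarrow> k < r \<Longrightarrow> rank_at_most n k T' \<Longrightarrow> T' = 0\<^sub>m n n"
    and A: "A \<in> mat_span n U"
  shows "\<exists>c. T * A * T = c \<cdot>\<^sub>m T"
proof -
  obtain E Y where E: "E \<in> carrier_mat n r" and Y: "Y \<in> carrier_mat r n" and TEY: "T = E * Y"
    using T(2) unfolding rank_at_most_def by blast
  have Ac: "A \<in> carrier_mat n n" using mat_span_carrier[OF U(1) A] .
  have Tc: "T \<in> carrier_mat n n" using mat_span_carrier[OF U(1) T(1)] .
  define M where "M = Y * A * E"
  have M: "M \<in> carrier_mat r r" unfolding M_def using E Y Ac by simp
  \<comment> \<open>for an eigenvalue \<open>c\<close> of \<open>M\<close>, \<open>T * A * T - c \<cdot> T\<close> factors through a smaller dimension\<close>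
  obtain c where "det (char_matrix M c) = 0" using exists_singular_char_matrix[OF M T(3)] by blast
  then obtain k E1 Y1 where k: "k < r" and E1: "E1 \<in> carrier_mat r k" and Y1: "Y1 \<in> carrier_mat k r"
    and S: "char_matrix M c = E1 * Y1"
    using factor_through_smaller_dim[of "char_matrix M c" r] M by auto
  have "E * M * Y = T * A * T"
    unfolding M_def TEY using carrier_matD[OF E] carrier_matD[OF Y] carrier_matD[OF Ac]
    by (simp add: assoc_mult_mat_dims)
  moreover have "E * char_matrix M c = E * M + (- c) \<cdot>\<^sub>m E"
    unfolding char_matrix_def using E M
    by (simp add: mult_add_distrib_mat[OF E M] mult_smult_distrib[OF E one_carrier_mat])
  then have "E * char_matrix M c * Y = E * M * Y + (- c) \<cdot>\<^sub>m T"
    unfolding TEY using E M Y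
    by (simp add: add_mult_distrib_mat[OF mult_carrier_mat[OF E M] smult_carrier_mat[OF E] Y]
        mult_smult_assoc_mat[OF E Y])
  moreover have "E * char_matrix M c * Y = (E * E1) * (Y1 * Y)"
    unfolding S using carrier_matD[OF E] carrier_matD[OF E1] carrier_matD[OF Y1] carrier_matD[OF Y]
    by (simp add: assoc_mult_mat_dims)
  ultimately have "rank_at_most n k (T * A * T + (- c) \<cdot>\<^sub>m T)"
    unfolding rank_at_most_def using E E1 Y1 Y by (metis mult_carrier_mat)
  moreover have "T * A * T + (- c) \<cdot>\<^sub>m T \<in> mat_span n U"
    using mat_span_mult[OF U mat_span_mult[OF U T(1) A] T(1)] T(1) by (intro mat_span.add mat_span.smult)
  ultimately have zero: "T * A * T + (- c) \<cdot>\<^sub>m T = 0\<^sub>m n n" using min k by blast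
  have "T * A * T = c \<cdot>\<^sub>m T"
  proof (rule eq_matI)
    fix i j assume "i < dim_row (c \<cdot>\<^sub>m T)" "j < dim_col (c \<cdot>\<^sub>m T)"
    then show "(T * A * T) $$ (i,j) = (c \<cdot>\<^sub>m T) $$ (i,j)"
      using arg_cong[OF zero, of "\<lambda>B. B $$ (i,j)"] Tc Ac by simp
  qed (use Tc Ac in auto)
  then show ?thesis by blast
qed

lemma rank_one_of_sandwich:
  fixes T :: "'a::field mat"
  assumes T: "T \<in> carrier_mat n n" "T \<noteq> 0\<^sub>m n n" and S: "S \<subseteq> carrier_mat n n"
    and trans: "acts_transitively n S" and sandwich: "\<forall>A\<in>S. \<exists>c. T * A * T = c \<cdot>\<^sub>m T"
  shows "\<exists>w c. w \<in> carrier_vec n \<and> c \<in> carrier_vec n \<and> w \<noteq> 0\<^sub>v n \<and> c \<noteq> 0\<^sub>v n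
    \<and> (\<forall>i<n. \<forall>j<n. T $$ (i,j) = w $ i * c $ j)"
proof -
  have "\<exists>j<n. T *\<^sub>v unit_vec n j \<noteq> 0\<^sub>v n"
  proof (rule ccontr)
    assume "\<not> ?thesis"
    then have "T = 0\<^sub>m n n" using T(1) by (intro mat_eqI_mult_unit_vec[of _ n n]) auto
    then show False using T(2) by simp
  qed
  then obtain j where j: "j < n" "T *\<^sub>v unit_vec n j \<noteq> 0\<^sub>v n" by blast
  define w where "w = T *\<^sub>v unit_vec n j"
  have w: "w \<in> carrier_vec n" "w \<noteq> 0\<^sub>v n" unfolding w_def using j T(1) by auto
  have line: "\<exists>d. T *\<^sub>v y = d \<cdot>\<^sub>v w" if y: "y \<in> carrier_vec n" for y
  proof -
    obtain A where A: "A \<in> S" "A *\<^sub>v w = y" using trans w y unfolding acts_transitively_def by blast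
    obtain d where d: "T * A * T = d \<cdot>\<^sub>m T" using sandwich A(1) by blast
    have Ac: "A \<in> carrier_mat n n" using S A(1) by auto
    have "T *\<^sub>v y = (T * A * T) *\<^sub>v unit_vec n j"
      unfolding A(2)[symmetric] w_def using carrier_matD[OF T(1)] carrier_matD[OF Ac]
      by (simp add: assoc_mult_mat_vec_dims)
    also have "\<dots> = d \<cdot>\<^sub>v w" unfolding d w_def by (rule smult_mat_mult_vec[OF T(1) unit_vec_carrier])
    finally show ?thesis by blast
  qed
  have "\<forall>l. \<exists>d. l < n \<longrightarrow> T *\<^sub>v unit_vec n l = d \<cdot>\<^sub>v w" using line unit_vec_carrier by blast
  from choice[OF this] obtain f where f: "\<And>l. l < n \<Longrightarrow> T *\<^sub>v unit_vec n l = f l \<cdot>\<^sub>v w"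
    by blast
  define c where "c = vec n f"
  have Tc: "T $$ (i,l) = w $ i * c $ l" if il: "i < n" "l < n" for i l
  proof -
    have "T $$ (i,l) = (T *\<^sub>v unit_vec n l) $ i" using mult_unit_vec_col[OF T(1) il(2)] il T(1) by simp
    also have "\<dots> = w $ i * c $ l" unfolding f[OF il(2)] c_def using il w(1) by (simp add: mult.commute)
    finally show ?thesis .
  qed
  have "c \<noteq> 0\<^sub>v n"
  proof
    assume "c = 0\<^sub>v n"
    then have "T = 0\<^sub>m n n" using Tc T(1) by (intro eq_matI) auto
    then show False using T(2) by simp
  qed
  moreover have "c \<in> carrier_vec n" unfolding c_def by simp
  ultimately show ?thesis using w Tc by blast
qed

lemma exists_rank_one_in_span:
  fixes U :: "'a::alg_closed_field mat set"
  assumes U: "U \<subseteq> carrier_mat n n" "\<forall>u\<in>U. \<forall>v\<in>U. u * v \<in> U" "1\<^sub>m n \<in> U" and n: "0 < n"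
    and trans: "acts_transitively n (mat_span n U)"
  shows "\<exists>T\<in>mat_span n U. \<exists>w c. w \<in> carrier_vec n \<and> c \<in> carrier_vec n \<and> w \<noteq> 0\<^sub>v n \<and> c \<noteq> 0\<^sub>v n
    \<and> (\<forall>i<n. \<forall>j<n. T $$ (i,j) = w $ i * c $ j)"
proof -
  let ?P = "\<lambda>r. \<exists>T\<in>mat_span n U. T \<noteq> 0\<^sub>m n n \<and> rank_at_most n r T"
  have one_ne_zero: "1\<^sub>m n \<noteq> (0\<^sub>m n n :: 'a mat)" using n by (auto dest!: arg_cong[of _ _ "\<lambda>B. B $$ (0,0)"])
  have "?P n" using U(3) one_ne_zero unfolding rank_at_most_def
    by (intro bexI[of _ "1\<^sub>m n"]) (auto intro!: bexI[of _ "1\<^sub>m n"] mat_span.gen)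
  define r where "r = (LEAST r. ?P r)"
  obtain T where T: "T \<in> mat_span n U" "T \<noteq> 0\<^sub>m n n" "rank_at_most n r T"
    using LeastI_ex[of ?P] \<open>?P n\<close> unfolding r_def by blast
  have min: "T' = 0\<^sub>m n n" if "T' \<in> mat_span n U" "k < r" "rank_at_most n k T'" for T' k
    using not_less_Least[of k ?P] that unfolding r_def by blast
  have "0 < r"
  proof (rule ccontr)
    assume "\<not> 0 < r"
    then obtain E Y where "E \<in> carrier_mat n 0" "Y \<in> carrier_mat 0 n" "T = E * Y"
      using T(3) unfolding rank_at_most_def by auto
    then have "T = 0\<^sub>m n n" by (intro eq_matI) (auto simp: scalar_prod_def)
    then show False using T(2) by simp
  qed
  then have "\<forall>A\<in>mat_span n U. \<exists>c. T * A * T = c \<cdot>\<^sub>m T"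
    using minimal_rank_sandwich[OF U(1,2) T(1,3)] min by blast
  then show ?thesis
    using rank_one_of_sandwich[OF mat_span_carrier[OF U(1) T(1)] T(2) _ trans] mat_span_carrier[OF U(1)] T(1)
    by blast
qed

lemma mat_trace_rank_one_mult:
  assumes T: "T \<in> carrier_mat n n" and Tc: "\<forall>i<n. \<forall>j<n. T $$ (i,j) = w $ i * c $ j"
    and w: "w \<in> carrier_vec n" and c: "c \<in> carrier_vec n" and Z: "Z \<in> carrier_mat n n"
  shows "mat_trace (T * Z) = c \<bullet> (Z *\<^sub>v w)"
proof -
  have "mat_trace (T * Z) = (\<Sum>i<n. \<Sum>l<n. c $ l * (Z $$ (l,i) * w $ i))"
    using T Z Tc by (simp add: mat_trace_def scalar_prod_def atLeast0LessThan mult_ac)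
  also have "\<dots> = (\<Sum>l<n. \<Sum>i<n. c $ l * (Z $$ (l,i) * w $ i))" by (rule sum.swap)
  also have "\<dots> = c \<bullet> (Z *\<^sub>v w)"
    using Z w c by (simp add: scalar_prod_def atLeast0LessThan sum_distrib_left)
  finally show ?thesis .
qed

lemma rank_one_span_orthogonal:
  assumes U: "unipotent_monoid n U" and u: "u \<in> U"
    and T: "T \<in> mat_span n U" and Tc: "\<forall>i<n. \<forall>j<n. T $$ (i,j) = w $ i * c $ j"
    and w: "w \<in> carrier_vec n" and c: "c \<in> carrier_vec n"
    and A: "A \<in> mat_span n U" and A': "A' \<in> mat_span n U"
  shows "c \<bullet> (A' *\<^sub>v ((u - 1\<^sub>m n) *\<^sub>v (A *\<^sub>v w))) = 0"
proof -
  have Uc: "U \<subseteq> carrier_mat n n" using U unfolding unipotent_monoid_def by simp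
  have span_mult: "a * b \<in> mat_span n U" if "a \<in> mat_span n U" "b \<in> mat_span n U" for a b
    using mat_span_mult[OF Uc _ that] U unfolding unipotent_monoid_def by blast
  have cs: "A \<in> carrier_mat n n" "T \<in> carrier_mat n n" "A' \<in> carrier_mat n n" "u \<in> carrier_mat n n"
    using A T A' u Uc mat_span_carrier[OF Uc] by auto
  note dims = carrier_matD[OF cs(1)] carrier_matD[OF cs(2)] carrier_matD[OF cs(3)] carrier_matD[OF cs(4)]
  \<comment> \<open>\<open>A * T * A'\<close> lies in the span of \<open>U\<close>; rotate the trace and use that \<open>T\<close> has rank one\<close>
  have "0 = mat_trace (A * (T * A' * (u - 1\<^sub>m n)))"
    using mat_trace_span_mult_minus_one[OF U span_mult[OF span_mult[OF A T] A'] u] dims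
    by (simp add: assoc_mult_mat_dims)
  also have "\<dots> = mat_trace (T * (A' * (u - 1\<^sub>m n) * A))"
    using mat_trace_mult_comm[of A n n] cs dims by (simp add: assoc_mult_mat_dims)
  also have "\<dots> = c \<bullet> (A' *\<^sub>v ((u - 1\<^sub>m n) *\<^sub>v (A *\<^sub>v w)))"
    using mat_trace_rank_one_mult[OF cs(2) Tc w c, of "A' * (u - 1\<^sub>m n) * A"] w dims cs
      mult_carrier_mat[OF mult_carrier_mat[OF cs(3) minus_carrier_mat[OF one_carrier_mat]] cs(1)]
    by (simp add: assoc_mult_mat_vec_dims)
  finally show ?thesis by simp
qed

lemma transitive_unipotent_monoid_trivial:
  fixes U :: "'a::alg_closed_field mat set"
  assumes U: "unipotent_monoid n U" and trans: "acts_transitively n (mat_span n U)" and u: "u \<in> U"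
  shows "u = 1\<^sub>m n"
proof (cases "n = 0")
  case True
  then show ?thesis using U u unfolding unipotent_monoid_def by (intro eq_matI) auto
next
  case False
  have Uc: "U \<subseteq> carrier_mat n n" using U unfolding unipotent_monoid_def by simp
  then have uc: "u \<in> carrier_mat n n" using u by auto
  obtain T w c where T: "T \<in> mat_span n U" and w: "w \<in> carrier_vec n" "w \<noteq> 0\<^sub>v n"
    and c: "c \<in> carrier_vec n" "c \<noteq> 0\<^sub>v n" and Tc: "\<forall>i<n. \<forall>j<n. T $$ (i,j) = w $ i * c $ j"
    using exists_rank_one_in_span[OF Uc _ _ _ trans] U False unfolding unipotent_monoid_def by blast
  have zero: "(u - 1\<^sub>m n) *\<^sub>v x = 0\<^sub>v n" if x: "x \<in> carrier_vec n" for x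
  proof (rule ccontr)
    define y where "y = (u - 1\<^sub>m n) *\<^sub>v x"
    assume "y \<noteq> 0\<^sub>v n"
    moreover have y: "y \<in> carrier_vec n"
      unfolding y_def using mult_mat_vec_carrier[OF minus_carrier_mat[OF one_carrier_mat] x] .
    obtain A where A: "A \<in> mat_span n U" "A *\<^sub>v w = x"
      using trans w x unfolding acts_transitively_def by blast
    have "c $ l = 0" if l: "l < n" for l
    proof -
      obtain A' where A': "A' \<in> mat_span n U" "A' *\<^sub>v y = unit_vec n l"
        using trans \<open>y \<noteq> 0\<^sub>v n\<close> y unit_vec_carrier unfolding acts_transitively_def by blast
      have "c \<bullet> unit_vec n l = 0"
        using rank_one_span_orthogonal[OF U u T Tc w(1) c(1) A(1) A'(1)] A'(2) A(2) unfolding y_def by simp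
      then show ?thesis using scalar_prod_right_unit[OF l, of c] by simp
    qed
    then have "c = 0\<^sub>v n" using c(1) by (intro eq_vecI) auto
    then show False using c(2) by simp
  qed
  have "u - 1\<^sub>m n = 0\<^sub>m n n"
  proof (rule mat_eqI_mult_unit_vec[of _ n n])
    fix j assume "j < n"
    then show "(u - 1\<^sub>m n) *\<^sub>v unit_vec n j = 0\<^sub>m n n *\<^sub>v unit_vec n j"
      using zero[OF unit_vec_carrier] by simp
  qed (use uc in auto)
  then show ?thesis by (rule mat_eq_if_minus_eq_zero[OF uc one_carrier_mat])
qed

section \<open>Kolchin's theorem\<close>

lemma vec_subspace_orbit_span:
  assumes U: "U \<subseteq> carrier_mat n n" and v: "v \<in> carrier_vec n"
  shows "vec_subspace n ((\<lambda>a. a *\<^sub>v v) ` mat_span n U)"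
  unfolding vec_subspace_def
proof (intro conjI ballI allI)
  note carrier = mat_span_carrier[OF U]
  show "(\<lambda>a. a *\<^sub>v v) ` mat_span n U \<subseteq> carrier_vec n" using carrier v mult_mat_vec_carrier by blast
  show "0\<^sub>v n \<in> (\<lambda>a. a *\<^sub>v v) ` mat_span n U"
    using v by (intro image_eqI[of _ _ "0\<^sub>m n n"]) (auto intro: mat_span.zero)
  fix x y assume "x \<in> (\<lambda>a. a *\<^sub>v v) ` mat_span n U" "y \<in> (\<lambda>a. a *\<^sub>v v) ` mat_span n U"
  then obtain a b where ab: "a \<in> mat_span n U" "b \<in> mat_span n U" "x = a *\<^sub>v v" "y = b *\<^sub>v v" by auto
  then have "x + y = (a + b) *\<^sub>v v" using add_mult_distrib_mat_vec[OF carrier carrier v] by simp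
  then show "x + y \<in> (\<lambda>a. a *\<^sub>v v) ` mat_span n U" using ab by (auto intro: mat_span.add)
next
  fix c x assume "x \<in> (\<lambda>a. a *\<^sub>v v) ` mat_span n U"
  then obtain a where a: "a \<in> mat_span n U" "x = a *\<^sub>v v" by auto
  then have "c \<cdot>\<^sub>v x = (c \<cdot>\<^sub>m a) *\<^sub>v v" using smult_mat_mult_vec[OF mat_span_carrier[OF U a(1)] v] by simp
  then show "c \<cdot>\<^sub>v x \<in> (\<lambda>a. a *\<^sub>v v) ` mat_span n U" using a by (auto intro: mat_span.smult)
qed

lemma invariant_basis_fixed_vector:
  assumes U: "U \<subseteq> carrier_mat n n" and E: "E \<in> carrier_mat n k" "inj_mat E"
    and inv: "\<forall>u\<in>U. \<forall>z\<in>carrier_vec k. u *\<^sub>v (E *\<^sub>v z) \<in> (\<lambda>z. E *\<^sub>v z) ` carrier_vec k"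
    and z: "z \<in> carrier_vec k" "z \<noteq> 0\<^sub>v k" "\<forall>M\<in>restrict_mat E ` U. M *\<^sub>v z = z"
  shows "E *\<^sub>v z \<in> carrier_vec n" "E *\<^sub>v z \<noteq> 0\<^sub>v n" "\<forall>u\<in>U. u *\<^sub>v (E *\<^sub>v z) = E *\<^sub>v z"
proof -
  show "E *\<^sub>v z \<in> carrier_vec n" using E(1) z(1) by simp
  show "E *\<^sub>v z \<noteq> 0\<^sub>v n" using inj_matD[OF E(2,1) z(1)] z(2) by blast
  show "\<forall>u\<in>U. u *\<^sub>v (E *\<^sub>v z) = E *\<^sub>v z"
  proof
    fix u assume u: "u \<in> U"
    have uc: "u \<in> carrier_mat n n" using u U by auto
    note R = restrict_mat[OF E(1) uc bspec[OF inv u]]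
    have "u *\<^sub>v (E *\<^sub>v z) = E *\<^sub>v (restrict_mat E u *\<^sub>v z)"
      using R uc E(1) z(1) by (simp flip: assoc_mult_mat_vec)
    then show "u *\<^sub>v (E *\<^sub>v z) = E *\<^sub>v z" using z(3) u by simp
  qed
qed

lemma unipotent_monoid_fixed_vector:
  fixes U :: "'a::alg_closed_field mat set"
  assumes "unipotent_monoid n U" "0 < n"
  shows "\<exists>v\<in>carrier_vec n. v \<noteq> 0\<^sub>v n \<and> (\<forall>u\<in>U. u *\<^sub>v v = v)"
  using assms
proof (induction n arbitrary: U rule: less_induct)
  case (less n)
  note U = less.prems(1)
  have Uc: "U \<subseteq> carrier_mat n n" and mult: "\<forall>a\<in>U. \<forall>b\<in>U. a * b \<in> U" and one: "1\<^sub>m n \<in> U"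
    using U unfolding unipotent_monoid_def by auto
  show ?case
  proof (cases "acts_transitively n (mat_span n U)")
    case True
    then have "\<forall>u\<in>U. u *\<^sub>v unit_vec n 0 = unit_vec n 0"
      by (auto dest: transitive_unipotent_monoid_trivial[OF U])
    then show ?thesis using less.prems(2) by (intro bexI[of _ "unit_vec n 0"]) auto
  next
    case False
    then obtain v w where v: "v \<in> carrier_vec n" "v \<noteq> 0\<^sub>v n" and w: "w \<in> carrier_vec n"
      and not_reached: "\<forall>a\<in>mat_span n U. a *\<^sub>v v \<noteq> w"
      unfolding acts_transitively_def by blast
    \<comment> \<open>the orbit of \<open>v\<close> under the span is a proper invariant subspace; recurse on it\<close>
    define W where "W = (\<lambda>a. a *\<^sub>v v) ` mat_span n U"
    have "W \<noteq> carrier_vec n" using w not_reached unfolding W_def by (metis imageE)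
    then obtain k E where k: "k < n" and E: "E \<in> carrier_mat n k" "inj_mat E"
      and EW: "(\<lambda>z. E *\<^sub>v z) ` carrier_vec k = W"
      using proper_subspace_basis[OF vec_subspace_orbit_span[OF Uc v(1)]] unfolding W_def by blast
    have "v \<in> W" unfolding W_def using mat_span.gen[OF one] v by (intro image_eqI[of _ _ "1\<^sub>m n"]) auto
    then have "0 < k" using v(2) E(1) unfolding EW[symmetric] by (auto intro: gr0I simp: scalar_prod_def)
    have "u *\<^sub>v x \<in> W" if "u \<in> U" "x \<in> W" for u x
    proof -
      obtain a where a: "a \<in> mat_span n U" "x = a *\<^sub>v v" using \<open>x \<in> W\<close> unfolding W_def by blast
      have "u *\<^sub>v x = (u * a) *\<^sub>v v" using a v Uc that(1) mat_span_carrier[OF Uc a(1)] by auto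
      then show ?thesis unfolding W_def using mat_span_mult[OF Uc mult mat_span.gen[OF that(1)] a(1)] by blast
    qed
    then have inv: "\<forall>u\<in>U. \<forall>z\<in>carrier_vec k. u *\<^sub>v (E *\<^sub>v z) \<in> (\<lambda>z. E *\<^sub>v z) ` carrier_vec k"
      using EW by blast
    obtain z where "z \<in> carrier_vec k" "z \<noteq> 0\<^sub>v k" "\<forall>M\<in>restrict_mat E ` U. M *\<^sub>v z = z"
      using less.IH[OF k unipotent_monoid_restrict[OF U E inv] \<open>0 < k\<close>] by blast
    then show ?thesis using invariant_basis_fixed_vector[OF Uc E inv] by blast
  qed
qed

lemma pow_mat_Suc_left:
  assumes "A \<in> carrier_mat n n"
  shows "A ^\<^sub>m Suc j = A * A ^\<^sub>m j"
proof (induction j)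
  case (Suc j)
  have "A ^\<^sub>m Suc (Suc j) = (A * A ^\<^sub>m j) * A" using Suc by simp
  also have "\<dots> = A * A ^\<^sub>m Suc j" using assoc_mult_mat[OF assms pow_carrier_mat[OF assms] assms] by simp
  finally show ?case .
qed (use assms in simp)

lemma transpose_pow_mat:
  fixes A :: "'a::comm_semiring_1 mat"
  assumes A: "A \<in> carrier_mat n n"
  shows "transpose_mat (A ^\<^sub>m j) = transpose_mat A ^\<^sub>m j"
proof (induction j)
  case (Suc j)
  have "transpose_mat (A ^\<^sub>m Suc j) = transpose_mat A * transpose_mat A ^\<^sub>m j"
    using transpose_mult[OF pow_carrier_mat[OF A] A] Suc by simp
  then show ?case using pow_mat_Suc_left[of "transpose_mat A" n j] A by simp
qed (use A in simp)

lemma unipotent_monoid_transpose: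
  assumes U: "unipotent_monoid n U"
  shows "unipotent_monoid n (transpose_mat ` U)"
proof -
  have Uc: "U \<subseteq> carrier_mat n n" using U unfolding unipotent_monoid_def by simp
  have "transpose_mat a * transpose_mat b \<in> transpose_mat ` U" if "a \<in> U" "b \<in> U" for a b
  proof -
    have "transpose_mat a * transpose_mat b = transpose_mat (b * a)"
      using transpose_mult[OF subsetD[OF Uc that(2)] subsetD[OF Uc that(1)]] by simp
    moreover have "b * a \<in> U" using U that unfolding unipotent_monoid_def by simp
    ultimately show ?thesis by simp
  qed
  moreover have "unipotent_mat n (transpose_mat u)" if u: "u \<in> U" for u
  proof -
    obtain j where j: "(u - 1\<^sub>m n) ^\<^sub>m j = 0\<^sub>m n n"
      using U u unfolding unipotent_monoid_def unipotent_mat_def by blast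
    have "transpose_mat u - 1\<^sub>m n = transpose_mat (u - 1\<^sub>m n)"
      using transpose_minus[of u n n "1\<^sub>m n"] u Uc by auto
    then have "(transpose_mat u - 1\<^sub>m n) ^\<^sub>m j = 0\<^sub>m n n"
      using transpose_pow_mat[of "u - 1\<^sub>m n" n j] j u Uc by auto
    then show ?thesis unfolding unipotent_mat_def by blast
  qed
  ultimately show ?thesis
    using U unfolding unipotent_monoid_def by (auto intro: image_eqI[of _ _ "1\<^sub>m n"])
qed

lemma unipotent_monoid_hyperplane:
  fixes U :: "'a::alg_closed_field mat set"
  assumes U: "unipotent_monoid n U" and n: "0 < n"
  shows "\<exists>k<n. \<exists>E\<in>carrier_mat n k. inj_mat E \<and>
    (\<forall>u\<in>U. \<forall>x\<in>carrier_vec n. (u - 1\<^sub>m n) *\<^sub>v x \<in> (\<lambda>z. E *\<^sub>v z) ` carrier_vec k)"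
proof -
  have Uc: "U \<subseteq> carrier_mat n n" using U unfolding unipotent_monoid_def by simp
  obtain \<phi> where \<phi>: "\<phi> \<in> carrier_vec n" "\<phi> \<noteq> 0\<^sub>v n" "\<forall>u\<in>U. transpose_mat u *\<^sub>v \<phi> = \<phi>"
    using unipotent_monoid_fixed_vector[OF unipotent_monoid_transpose[OF U] n] by blast
  define W where "W = {x \<in> carrier_vec n. \<phi> \<bullet> x = 0}"
  have W: "vec_subspace n W"
    unfolding vec_subspace_def W_def using \<phi>(1) by (auto simp: scalar_prod_add_distrib[of \<phi> n])
  have "\<exists>l<n. \<phi> $ l \<noteq> 0"
  proof (rule ccontr)
    assume "\<not> ?thesis"
    then have "\<phi> = 0\<^sub>v n" using \<phi>(1) by (intro eq_vecI) auto
    then show False using \<phi>(2) by simp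
  qed
  then obtain l where "l < n" "\<phi> $ l \<noteq> 0" by blast
  then have "unit_vec n l \<notin> W" unfolding W_def using \<phi>(1) by simp
  then obtain k E where k: "k < n" and E: "E \<in> carrier_mat n k" "inj_mat E"
    and EW: "(\<lambda>z. E *\<^sub>v z) ` carrier_vec k = W"
    using proper_subspace_basis[OF W] unit_vec_carrier[of n l] by blast
  have "(u - 1\<^sub>m n) *\<^sub>v x \<in> W" if u: "u \<in> U" and x: "x \<in> carrier_vec n" for u x
  proof -
    have uc: "u \<in> carrier_mat n n" using u Uc by auto
    have "\<phi> \<bullet> (u *\<^sub>v x) = \<phi> \<bullet> x"
      using transpose_vec_mult_scalar[OF uc x \<phi>(1)] \<phi>(3) u by simp
    then show ?thesis
      unfolding W_def using uc x \<phi>(1) by (simp add: minus_mult_distrib_mat_vec scalar_prod_minus_distrib)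
  qed
  then show ?thesis using k E EW by blast
qed

definition prod_minus_one :: "nat \<Rightarrow> 'a::field mat list \<Rightarrow> 'a mat" where
  "prod_minus_one n us = mat_list_prod n (map (\<lambda>u. u - 1\<^sub>m n) us)"

lemma prod_minus_one_simps:
  "prod_minus_one n [] = 1\<^sub>m n"
  "prod_minus_one n (u # us) = (u - 1\<^sub>m n) * prod_minus_one n us"
  unfolding prod_minus_one_def by simp_all

lemma prod_minus_one_carrier: "prod_minus_one n us \<in> carrier_mat n n"
  unfolding prod_minus_one_def by (intro mat_list_prod_carrier) auto

lemma prod_minus_one_snoc: "prod_minus_one n (us @ [u]) = prod_minus_one n us * (u - 1\<^sub>m n)"
proof -
  have "set (map (\<lambda>u. u - 1\<^sub>m n) us) \<subseteq> carrier_mat n n" by auto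
  from mat_list_prod_snoc[OF this, of "u - 1\<^sub>m n"] show ?thesis unfolding prod_minus_one_def by simp
qed

lemma prod_minus_one_restrict:
  assumes E: "E \<in> carrier_mat n k" and Uc: "U \<subseteq> carrier_mat n n"
    and inv: "\<forall>u\<in>U. \<forall>z\<in>carrier_vec k. u *\<^sub>v (E *\<^sub>v z) \<in> (\<lambda>z. E *\<^sub>v z) ` carrier_vec k"
    and us: "set us \<subseteq> U"
  shows "prod_minus_one n us * E = E * prod_minus_one k (map (restrict_mat E) us)"
  using us
proof (induction us)
  case (Cons u us)
  have uU: "u \<in> U" and us: "set us \<subseteq> U" using Cons.prems by auto
  then have u: "u \<in> carrier_mat n n" using Uc by auto
  note R = restrict_mat[OF E u bspec[OF inv uU]] restrict_mat_minus_one[OF E u bspec[OF inv uU]]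
  have "restrict_mat E w \<in> carrier_mat k k" if "w \<in> U" for w
    using restrict_mat(1)[OF E _ bspec[OF inv that]] that Uc by auto
  let ?P = "prod_minus_one n us" and ?Q = "prod_minus_one k (map (restrict_mat E) us)"
  have P: "?P \<in> carrier_mat n n" and Q: "?Q \<in> carrier_mat k k" by (rule prod_minus_one_carrier)+
  have "prod_minus_one n (u # us) * E = (u - 1\<^sub>m n) * (?P * E)"
    using u P E by (simp add: prod_minus_one_simps assoc_mult_mat[of _ n n _ n E k])
  also have "\<dots> = ((u - 1\<^sub>m n) * E) * ?Q"
    using Cons.IH[OF us] u E Q by (simp add: assoc_mult_mat[of _ n n E k _ k])
  also have "\<dots> = E * prod_minus_one k (map (restrict_mat E) (u # us))"
    using R(3) R(1) E Q by (simp add: prod_minus_one_simps assoc_mult_mat[of E n k _ k _ k])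
  finally show ?case .
qed (use E in \<open>simp add: prod_minus_one_simps\<close>)

lemma mult_range_if_minus_one_into_range:
  fixes E :: "'a::field mat"
  assumes E: "E \<in> carrier_mat n k" and u: "u \<in> carrier_mat n n"
    and into: "\<forall>x\<in>carrier_vec n. (u - 1\<^sub>m n) *\<^sub>v x \<in> (\<lambda>z. E *\<^sub>v z) ` carrier_vec k"
    and z: "z \<in> carrier_vec k"
  shows "u *\<^sub>v (E *\<^sub>v z) \<in> (\<lambda>z. E *\<^sub>v z) ` carrier_vec k"
proof -
  obtain z' where z': "z' \<in> carrier_vec k" "(u - 1\<^sub>m n) *\<^sub>v (E *\<^sub>v z) = E *\<^sub>v z'"
    using into mult_mat_vec_carrier[OF E z] by blast
  have "u = (u - 1\<^sub>m n) + 1\<^sub>m n" using u by (intro eq_matI) auto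
  then have "u *\<^sub>v (E *\<^sub>v z) = (u - 1\<^sub>m n) *\<^sub>v (E *\<^sub>v z) + E *\<^sub>v z"
    using add_mult_distrib_mat_vec[of "u - 1\<^sub>m n" n n "1\<^sub>m n" "E *\<^sub>v z"] u E z by simp
  also have "\<dots> = E *\<^sub>v (z' + z)" using z' mult_add_distrib_mat_vec[OF E z'(1) z] by simp
  finally show ?thesis by (rule image_eqI[OF _ add_carrier_vec[OF z'(1) z]])
qed

lemma prod_minus_one_eq_zero_alg_closed:
  fixes U :: "'a::alg_closed_field mat set"
  assumes "unipotent_monoid n U" "set us \<subseteq> U" "n \<le> length us"
  shows "prod_minus_one n us = 0\<^sub>m n n"
  using assms
proof (induction n arbitrary: U us rule: less_induct)
  case (less n)
  note U = less.prems(1)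
  have Uc: "U \<subseteq> carrier_mat n n" using U unfolding unipotent_monoid_def by simp
  show ?case
  proof (cases "n = 0")
    case True
    then show ?thesis using prod_minus_one_carrier[of n us] by (intro eq_matI) auto
  next
    case False
    obtain k E where k: "k < n" and E: "E \<in> carrier_mat n k" "inj_mat E"
      and into: "\<forall>u\<in>U. \<forall>x\<in>carrier_vec n. (u - 1\<^sub>m n) *\<^sub>v x \<in> (\<lambda>z. E *\<^sub>v z) ` carrier_vec k"
      using unipotent_monoid_hyperplane[OF U] False by blast
    have inv: "\<forall>u\<in>U. \<forall>z\<in>carrier_vec k. u *\<^sub>v (E *\<^sub>v z) \<in> (\<lambda>z. E *\<^sub>v z) ` carrier_vec k"
      using mult_range_if_minus_one_into_range[OF E(1)] into Uc by blast
    obtain vs v where us: "us = vs @ [v]" using less.prems(3) False by (cases us rule: rev_cases) auto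
    have vs: "set vs \<subseteq> U" and v: "v \<in> U" using less.prems(2) us by auto
    have "prod_minus_one k (map (restrict_mat E) vs) = 0\<^sub>m k k"
      using less.IH[OF k unipotent_monoid_restrict[OF U E inv], of "map (restrict_mat E) vs"]
        vs less.prems(3) us k by auto
    then have vsE: "prod_minus_one n vs * E = 0\<^sub>m n k"
      using prod_minus_one_restrict[OF E(1) Uc inv vs] E(1) by simp
    have P: "prod_minus_one n vs \<in> carrier_mat n n" by (rule prod_minus_one_carrier)
    show ?thesis
    proof (rule mat_eqI_mult_unit_vec[of _ n n])
      fix j assume j: "j < n"
      obtain z where z: "z \<in> carrier_vec k" "(v - 1\<^sub>m n) *\<^sub>v unit_vec n j = E *\<^sub>v z"
        using into v unit_vec_carrier[of n j] by blast
      have "prod_minus_one n us *\<^sub>v unit_vec n j = (prod_minus_one n vs * E) *\<^sub>v z"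
        using prod_minus_one_snoc[of n vs v] carrier_matD[OF P] E(1) z unfolding us
        by (simp add: assoc_mult_mat_vec_dims)
      then show "prod_minus_one n us *\<^sub>v unit_vec n j = 0\<^sub>m n n *\<^sub>v unit_vec n j"
        using vsE z(1) by simp
    qed (use prod_minus_one_carrier[of n us] in auto)
  qed
qed

lemma semiring_hom_to_ac: "semiring_hom (to_ac :: 'a::field \<Rightarrow> 'a alg_closure)"
  by unfold_locales simp_all

lemma map_mat_to_ac_minus_one:
  "A \<in> carrier_mat n n \<Longrightarrow> map_mat to_ac (A - 1\<^sub>m n) = map_mat to_ac A - 1\<^sub>m n"
  by (intro eq_matI) auto

lemma unipotent_monoid_map_to_ac:
  assumes U: "unipotent_monoid n U"
  shows "unipotent_monoid n (map_mat to_ac ` U)"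
proof -
  have Uc: "U \<subseteq> carrier_mat n n" and one: "1\<^sub>m n \<in> U" and mult: "\<forall>a\<in>U. \<forall>b\<in>U. a * b \<in> U"
    using U unfolding unipotent_monoid_def by auto
  note hom = semiring_hom.mat_hom_one[OF semiring_hom_to_ac] semiring_hom.mat_hom_mult[OF semiring_hom_to_ac]
    semiring_hom.mat_hom_pow[OF semiring_hom_to_ac]
  have "map_mat to_ac a * map_mat to_ac b \<in> map_mat to_ac ` U" if "a \<in> U" "b \<in> U" for a b
    using hom(2)[of a n n b n] that Uc mult by (metis image_eqI subsetD)
  moreover have "unipotent_mat n (map_mat to_ac u)" if u: "u \<in> U" for u
  proof -
    have uc: "u \<in> carrier_mat n n" using u Uc by auto
    obtain j where j: "(u - 1\<^sub>m n) ^\<^sub>m j = 0\<^sub>m n n"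
      using U u unfolding unipotent_monoid_def unipotent_mat_def by blast
    have "(map_mat to_ac u - 1\<^sub>m n) ^\<^sub>m j = map_mat to_ac ((u - 1\<^sub>m n) ^\<^sub>m j)"
      using hom(3)[of "u - 1\<^sub>m n" n j] map_mat_to_ac_minus_one[OF uc] by simp
    also have "\<dots> = 0\<^sub>m n n" unfolding j by (intro eq_matI) auto
    finally show ?thesis unfolding unipotent_mat_def by blast
  qed
  moreover have "1\<^sub>m n \<in> map_mat to_ac ` U" using one hom(1)[of n] by (metis image_eqI)
  ultimately show ?thesis using Uc unfolding unipotent_monoid_def by auto
qed

lemma prod_minus_one_map_to_ac:
  "set us \<subseteq> carrier_mat n n \<Longrightarrow>
    map_mat to_ac (prod_minus_one n us) = prod_minus_one n (map (map_mat to_ac) us)"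
proof (induction us)
  case (Cons u us)
  then show ?case
    using semiring_hom.mat_hom_mult[OF semiring_hom_to_ac, of "u - 1\<^sub>m n" n n "prod_minus_one n us" n]
      map_mat_to_ac_minus_one[of u n] prod_minus_one_carrier[of n us]
    by (simp add: prod_minus_one_simps)
qed (simp add: prod_minus_one_simps semiring_hom.mat_hom_one[OF semiring_hom_to_ac])

lemma prod_minus_one_eq_zero:
  fixes U :: "'a::field mat set"
  assumes U: "unipotent_monoid n U" and us: "set us \<subseteq> U" "n \<le> length us"
  shows "prod_minus_one n us = 0\<^sub>m n n"
proof -
  have Uc: "U \<subseteq> carrier_mat n n" using U unfolding unipotent_monoid_def by simp
  have zero: "map_mat to_ac (prod_minus_one n us) = 0\<^sub>m n n"
    using prod_minus_one_map_to_ac[of us n] us Uc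
      prod_minus_one_eq_zero_alg_closed[OF unipotent_monoid_map_to_ac[OF U], of "map (map_mat to_ac) us"]
    by auto
  show ?thesis
  proof (rule eq_matI)
    fix i j assume ij: "i < dim_row (0\<^sub>m n n :: 'a mat)" "j < dim_col (0\<^sub>m n n :: 'a mat)"
    then have "to_ac (prod_minus_one n us $$ (i,j)) = 0"
      using arg_cong[OF zero, of "\<lambda>M. M $$ (i,j)"] prod_minus_one_carrier[of n us] by simp
    then show "prod_minus_one n us $$ (i,j) = 0\<^sub>m n n $$ (i,j)" using ij by simp
  qed (use prod_minus_one_carrier[of n us] in auto)
qed

section \<open>Nilpotency in the enveloping algebra\<close>

lemma env_alg_carrier:
  assumes "H \<subseteq> carrier_mat n n" "a \<in> env_alg n H"
  shows "a \<in> carrier_mat n n"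
  using assms(2) by induction (use assms(1) in auto)

lemma env_alg_diff:
  assumes H: "H \<subseteq> carrier_mat n n" and "a \<in> env_alg n H" "b \<in> env_alg n H"
  shows "a - b \<in> env_alg n H"
proof -
  have "a - b = a + (- 1) \<cdot>\<^sub>m b" using assms env_alg_carrier[OF H] by (intro eq_matI) auto
  then show ?thesis using assms by (metis env_alg.add env_alg.smult)
qed

lemma prod_minus_one_conj:
  assumes h: "h \<in> carrier_mat n n" "h' \<in> carrier_mat n n" "h * h' = 1\<^sub>m n"
    and us: "set us \<subseteq> carrier_mat n n"
  shows "prod_minus_one n us * h = h * prod_minus_one n (map (\<lambda>v. h' * v * h) us)"
  using us
proof (induction us)
  case (Cons v us)
  let ?P = "prod_minus_one n us" and ?Q = "prod_minus_one n (map (\<lambda>v. h' * v * h) us)"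
  have v: "v \<in> carrier_mat n n" and us: "set us \<subseteq> carrier_mat n n" using Cons.prems by auto
  have P: "?P \<in> carrier_mat n n" and Q: "?Q \<in> carrier_mat n n" by (rule prod_minus_one_carrier)+
  have "h * (h' * v * h) = (h * h') * (v * h)"
    using carrier_matD[OF h(1)] carrier_matD[OF h(2)] carrier_matD[OF v] by (simp add: assoc_mult_mat_dims)
  then have hv: "h * (h' * v * h) = v * h" using h(3) v h(1) by simp
  have "h * (h' * v * h - 1\<^sub>m n) = h * (h' * v * h) - h * 1\<^sub>m n"
    by (rule mult_minus_distrib_mat[OF h(1) _ one_carrier_mat]) (use h v in simp)
  also have "\<dots> = v * h - 1\<^sub>m n * h" using hv h(1) by simp
  also have "\<dots> = (v - 1\<^sub>m n) * h" by (rule minus_mult_distrib_mat[OF v one_carrier_mat h(1), symmetric])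
  finally have step: "(v - 1\<^sub>m n) * h = h * (h' * v * h - 1\<^sub>m n)" ..
  have "prod_minus_one n (v # us) * h = (v - 1\<^sub>m n) * (h * ?Q)"
    using Cons.IH[OF us] v P h by (simp add: prod_minus_one_simps assoc_mult_mat[of _ n n ?P n h n])
  also have "\<dots> = ((v - 1\<^sub>m n) * h) * ?Q"
    by (rule assoc_mult_mat[OF minus_carrier_mat[OF one_carrier_mat] h(1) Q, symmetric])
  also have "\<dots> = h * ((h' * v * h - 1\<^sub>m n) * ?Q)"
    unfolding step using h v by (intro assoc_mult_mat[OF h(1) _ Q]) simp
  finally show ?case by (simp add: prod_minus_one_simps)
qed (use h in \<open>simp add: prod_minus_one_simps\<close>)

definition annihilated_by_prods :: "nat \<Rightarrow> 'a::field mat set \<Rightarrow> nat \<Rightarrow> 'a mat \<Rightarrow> bool" where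
  "annihilated_by_prods n U j M \<longleftrightarrow> M \<in> carrier_mat n n \<and>
     (\<forall>us. set us \<subseteq> U \<longrightarrow> length us = j \<longrightarrow> prod_minus_one n us * M = 0\<^sub>m n n)"

lemma annihilated_by_prods_0: "annihilated_by_prods n U 0 M \<Longrightarrow> M = 0\<^sub>m n n"
  unfolding annihilated_by_prods_def by (auto simp: prod_minus_one_simps)

lemma annihilated_by_prods_dim:
  assumes "unipotent_monoid n U" "M \<in> carrier_mat n n"
  shows "annihilated_by_prods n U n M"
  unfolding annihilated_by_prods_def using prod_minus_one_eq_zero[OF assms(1)] assms(2) by auto

lemma annihilated_by_prods_add:
  assumes "annihilated_by_prods n U j M" "annihilated_by_prods n U j M'"
  shows "annihilated_by_prods n U j (M + M')"
  using assms unfolding annihilated_by_prods_def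
  by (auto simp: mult_add_distrib_mat[OF prod_minus_one_carrier])

lemma annihilated_by_prods_smult:
  assumes "annihilated_by_prods n U j M"
  shows "annihilated_by_prods n U j (c \<cdot>\<^sub>m M)"
  using assms unfolding annihilated_by_prods_def
  by (auto simp: mult_smult_distrib[OF prod_minus_one_carrier])

lemma annihilated_by_prods_minus_one:
  assumes Uc: "U \<subseteq> carrier_mat n n" and v: "v \<in> U" and M: "annihilated_by_prods n U (Suc j) M"
  shows "annihilated_by_prods n U j ((v - 1\<^sub>m n) * M)"
  unfolding annihilated_by_prods_def
proof (intro conjI allI impI)
  have Mc: "M \<in> carrier_mat n n" using M unfolding annihilated_by_prods_def by simp
  then show "(v - 1\<^sub>m n) * M \<in> carrier_mat n n"
    by (rule mult_carrier_mat[OF minus_carrier_mat[OF one_carrier_mat]])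
  fix us assume "set us \<subseteq> U" "length us = j"
  then have "prod_minus_one n (us @ [v]) * M = 0\<^sub>m n n"
    using M v unfolding annihilated_by_prods_def by simp
  then show "prod_minus_one n us * ((v - 1\<^sub>m n) * M) = 0\<^sub>m n n"
    using Mc prod_minus_one_carrier[of n us]
    by (simp add: prod_minus_one_snoc assoc_mult_mat[of _ n n "v - 1\<^sub>m n" n M n])
qed

lemma annihilated_by_prods_env_alg:
  assumes H: "H \<subseteq> carrier_mat n n" and Uc: "U \<subseteq> carrier_mat n n"
    and conj: "\<forall>h\<in>H. \<exists>h'\<in>carrier_mat n n. h * h' = 1\<^sub>m n \<and> (\<forall>v\<in>U. h' * v * h \<in> U)"
    and a: "a \<in> env_alg n H" and M: "annihilated_by_prods n U j M"
  shows "annihilated_by_prods n U j (a * M)"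
  using a M
proof (induction arbitrary: M)
  case (gen h)
  obtain h' where h': "h' \<in> carrier_mat n n" "h * h' = 1\<^sub>m n" "\<forall>v\<in>U. h' * v * h \<in> U"
    using conj gen.hyps by blast
  have hc: "h \<in> carrier_mat n n" and Mc: "M \<in> carrier_mat n n"
    using gen H unfolding annihilated_by_prods_def by auto
  have "prod_minus_one n us * (h * M) = 0\<^sub>m n n" if "set us \<subseteq> U" "length us = j" for us
  proof -
    let ?P = "prod_minus_one n us" and ?Q = "prod_minus_one n (map (\<lambda>v. h' * v * h) us)"
    have "?P * (h * M) = (?P * h) * M" by (rule assoc_mult_mat[OF prod_minus_one_carrier hc Mc, symmetric])
    also have "\<dots> = (h * ?Q) * M" using prod_minus_one_conj[OF hc h'(1,2), of us] that Uc by auto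
    also have "\<dots> = h * (?Q * M)" by (rule assoc_mult_mat[OF hc prod_minus_one_carrier Mc])
    also have "\<dots> = 0\<^sub>m n n"
    proof -
      have "set (map (\<lambda>v. h' * v * h) us) \<subseteq> U" using h'(3) that(1) by auto
      then have "?Q * M = 0\<^sub>m n n" using gen.prems that(2) unfolding annihilated_by_prods_def by auto
      then show ?thesis using hc by simp
    qed
    finally show ?thesis .
  qed
  then show ?case using hc Mc unfolding annihilated_by_prods_def by simp
next
  case (add a b)
  have "(a + b) * M = a * M + b * M"
    using add env_alg_carrier[OF H] unfolding annihilated_by_prods_def by (meson add_mult_distrib_mat)
  then show ?case using add annihilated_by_prods_add by metis
next
  case (smult a c)
  have "(c \<cdot>\<^sub>m a) * M = c \<cdot>\<^sub>m (a * M)"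
    using smult env_alg_carrier[OF H] unfolding annihilated_by_prods_def by (meson mult_smult_assoc_mat)
  then show ?case using smult annihilated_by_prods_smult by metis
next
  case (mult a b)
  then show ?case
    using env_alg_carrier[OF H] unfolding annihilated_by_prods_def
    by (simp add: assoc_mult_mat[of a n n b n M n])
qed (auto simp: annihilated_by_prods_def intro: right_mult_zero_mat[OF prod_minus_one_carrier])

lemma env_alg_mult_minus_one_nilpotent:
  assumes H: "H \<subseteq> carrier_mat n n" and U: "unipotent_monoid n U"
    and conj: "\<forall>h\<in>H. \<exists>h'\<in>carrier_mat n n. h * h' = 1\<^sub>m n \<and> (\<forall>v\<in>U. h' * v * h \<in> U)"
    and a: "a \<in> env_alg n H" and v: "v \<in> U"
  shows "(a * (v - 1\<^sub>m n)) ^\<^sub>m n = 0\<^sub>m n n"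
proof -
  have Uc: "U \<subseteq> carrier_mat n n" using U unfolding unipotent_monoid_def by simp
  define z where "z = a * (v - 1\<^sub>m n)"
  have zc: "z \<in> carrier_mat n n" unfolding z_def using env_alg_carrier[OF H a] by simp
  have step: "annihilated_by_prods n U j (z * M)" if "annihilated_by_prods n U (Suc j) M" for j M
  proof -
    have "annihilated_by_prods n U j (a * ((v - 1\<^sub>m n) * M))"
      using annihilated_by_prods_env_alg[OF H Uc conj a annihilated_by_prods_minus_one[OF Uc v that]] .
    then show ?thesis
      using that env_alg_carrier[OF H a] unfolding z_def annihilated_by_prods_def
      by (simp add: assoc_mult_mat[of a n n "v - 1\<^sub>m n" n M n])
  qed
  have pow: "annihilated_by_prods n U m (z ^\<^sub>m i)" if "i + m = n" for i m
    using that
  proof (induction i arbitrary: m)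
    case 0
    then show ?case using annihilated_by_prods_dim[OF U] zc by simp
  next
    case (Suc i)
    then have "annihilated_by_prods n U (Suc m) (z ^\<^sub>m i)" by simp
    then show ?case using step pow_mat_Suc_left[OF zc] by simp
  qed
  from pow[of n 0] show ?thesis using annihilated_by_prods_0 unfolding z_def by simp
qed

section \<open>The Jacobson radical\<close>

lemma env_alg_geometric_series:
  assumes H: "H \<subseteq> carrier_mat n n" and z: "z \<in> env_alg n H"
  shows "\<exists>b\<in>env_alg n H. b * (1\<^sub>m n - z) = 1\<^sub>m n - z ^\<^sub>m m"
proof (induction m)
  case 0
  have "0\<^sub>m n n * (1\<^sub>m n - z) = 1\<^sub>m n - z ^\<^sub>m 0" using env_alg_carrier[OF H z] by (intro eq_matI) auto
  then show ?case using env_alg.zero by blast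
next
  case (Suc m)
  then obtain b where b: "b \<in> env_alg n H" "b * (1\<^sub>m n - z) = 1\<^sub>m n - z ^\<^sub>m m" by blast
  have zc: "z \<in> carrier_mat n n" and bc: "b \<in> carrier_mat n n"
    using env_alg_carrier[OF H] z b(1) by auto
  have "(1\<^sub>m n + z * b) * (1\<^sub>m n - z) = (1\<^sub>m n - z) + z * (b * (1\<^sub>m n - z))"
    using add_mult_distrib_mat[OF one_carrier_mat mult_carrier_mat[OF zc bc] minus_carrier_mat[OF zc]]
      assoc_mult_mat[OF zc bc minus_carrier_mat[OF zc]] zc by simp
  also have "\<dots> = (1\<^sub>m n - z) + (z - z ^\<^sub>m Suc m)"
    unfolding b(2) pow_mat_Suc_left[OF zc]
    using mult_minus_distrib_mat[OF zc one_carrier_mat pow_carrier_mat[OF zc]] zc by simp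
  also have "\<dots> = 1\<^sub>m n - z ^\<^sub>m Suc m" using zc by (intro eq_matI) auto
  finally show ?case using b(1) z by (blast intro: env_alg.add env_alg.one env_alg.mult)
qed

lemma left_ideal_add_left_multiples:
  assumes H: "H \<subseteq> carrier_mat n n" and L: "left_ideal n (env_alg n H) L" and x: "x \<in> env_alg n H"
  shows "left_ideal n (env_alg n H) {l + a * x |l a. l \<in> L \<and> a \<in> env_alg n H}"
    (is "left_ideal n ?A ?L'")
proof -
  have LA: "L \<subseteq> ?A" and L0: "0\<^sub>m n n \<in> L" and Ladd: "\<forall>y\<in>L. \<forall>y'\<in>L. y + y' \<in> L"
    and Lneg: "\<forall>y\<in>L. - y \<in> L" and Lmult: "\<forall>a\<in>?A. \<forall>y\<in>L. a * y \<in> L"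
    using L unfolding left_ideal_def by auto
  note carrier = env_alg_carrier[OF H]
  have xc: "x \<in> carrier_mat n n" using carrier[OF x] .
  have sub: "?L' \<subseteq> ?A" using LA x by (auto intro: env_alg.add env_alg.mult)
  have "0\<^sub>m n n = 0\<^sub>m n n + 0\<^sub>m n n * x" using xc by simp
  then have zero: "0\<^sub>m n n \<in> ?L'" using L0 env_alg.zero by blast
  have add: "\<forall>y\<in>?L'. \<forall>y'\<in>?L'. y + y' \<in> ?L'"
  proof (intro ballI)
    fix y y' assume y: "y \<in> ?L'" and y': "y' \<in> ?L'"
    obtain l a where "l \<in> L" "a \<in> ?A" "y = l + a * x" using y by blast
    moreover obtain l' a' where "l' \<in> L" "a' \<in> ?A" "y' = l' + a' * x" using y' by blast
    ultimately have la: "l \<in> L" "a \<in> ?A" "y = l + a * x" "l' \<in> L" "a' \<in> ?A" "y' = l' + a' * x"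
      by blast+
    have c: "l \<in> carrier_mat n n" "l' \<in> carrier_mat n n" "a \<in> carrier_mat n n" "a' \<in> carrier_mat n n"
      using la LA carrier by auto
    then have "y + y' = (l + l') + (a + a') * x"
      unfolding la(3,6) using xc add_mult_distrib_mat[of a n n a' x n] by (intro eq_matI) auto
    then show "y + y' \<in> ?L'" using la Ladd by (blast intro: env_alg.add)
  qed
  have neg: "\<forall>y\<in>?L'. - y \<in> ?L'"
  proof
    fix y assume y: "y \<in> ?L'"
    obtain l a where la: "l \<in> L" "a \<in> ?A" "y = l + a * x" using y by blast
    have c: "l \<in> carrier_mat n n" "a \<in> carrier_mat n n" using la LA carrier by auto
    then have "- y = - l + ((- 1) \<cdot>\<^sub>m a) * x"
      unfolding la(3) using xc mult_smult_assoc_mat[of a n n x n "- 1"] by (intro eq_matI) auto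
    then show "- y \<in> ?L'" using la Lneg by (blast intro: env_alg.smult)
  qed
  have mult: "\<forall>b\<in>?A. \<forall>y\<in>?L'. b * y \<in> ?L'"
  proof (intro ballI)
    fix b y assume b: "b \<in> ?A" and y: "y \<in> ?L'"
    obtain l a where la: "l \<in> L" "a \<in> ?A" "y = l + a * x" using y by blast
    have c: "l \<in> carrier_mat n n" "a \<in> carrier_mat n n" "b \<in> carrier_mat n n"
      using la b LA carrier by auto
    then have "b * y = b * l + (b * a) * x"
      unfolding la(3) using xc by (simp add: mult_add_distrib_mat[of b n n] assoc_mult_mat[of b n n a n x n])
    then show "b * y \<in> ?L'" using la b Lmult by (blast intro: env_alg.mult)
  qed
  show ?thesis unfolding left_ideal_def using sub zero add neg mult by (intro conjI) assumption+
qed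

lemma jacobson_rad_env_alg_if_left_multiples_nilpotent:
  assumes H: "H \<subseteq> carrier_mat n n" and x: "x \<in> env_alg n H"
    and nil: "\<And>a. a \<in> env_alg n H \<Longrightarrow> \<exists>m. (a * x) ^\<^sub>m m = 0\<^sub>m n n"
  shows "x \<in> jacobson_rad n (env_alg n H)"
  unfolding jacobson_rad_def
proof (intro CollectI conjI x allI impI)
  let ?A = "env_alg n H"
  note carrier = env_alg_carrier[OF H]
  fix L assume "maximal_left_ideal n ?A L"
  then have L: "left_ideal n ?A L" and LA: "L \<noteq> ?A"
    and max: "\<And>L'. left_ideal n ?A L' \<Longrightarrow> L \<subseteq> L' \<Longrightarrow> L' = L \<or> L' = ?A"
    unfolding maximal_left_ideal_def by auto
  have Lsub: "L \<subseteq> ?A" and Lmult: "\<forall>a\<in>?A. \<forall>y\<in>L. a * y \<in> L" using L unfolding left_ideal_def by auto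
  show "x \<in> L"
  proof (rule ccontr)
    assume "x \<notin> L"
    define L' where "L' = {l + a * x |l a. l \<in> L \<and> a \<in> ?A}"
    have "l = l + 0\<^sub>m n n * x" if "l \<in> L" for l
      using carrier[of l] that Lsub carrier[OF x] by auto
    then have "L \<subseteq> L'" unfolding L'_def using env_alg.zero by blast
    moreover have "x \<in> L'"
      unfolding L'_def using left_ideal_def L env_alg.one carrier[OF x]
      by (intro CollectI exI[of _ "0\<^sub>m n n"] exI[of _ "1\<^sub>m n"]) auto
    ultimately have "L' = ?A"
      using max[OF left_ideal_add_left_multiples[OF H L x, folded L'_def]] \<open>x \<notin> L\<close> by blast
    then obtain l a where la: "l \<in> L" "a \<in> ?A" "1\<^sub>m n = l + a * x"
      using env_alg.one unfolding L'_def by blast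
    \<comment> \<open>\<open>l = 1 - a * x\<close> is invertible in \<open>?A\<close> because \<open>a * x\<close> is nilpotent\<close>
    obtain m where "(a * x) ^\<^sub>m m = 0\<^sub>m n n" using nil[OF la(2)] by blast
    moreover have "1\<^sub>m n - 0\<^sub>m n n = (1\<^sub>m n :: 'a mat)" by (intro eq_matI) auto
    ultimately obtain b where b: "b \<in> ?A" "b * (1\<^sub>m n - a * x) = 1\<^sub>m n"
      using env_alg_geometric_series[OF H env_alg.mult[OF la(2) x], of m] by auto
    have lc: "l \<in> carrier_mat n n" and axc: "a * x \<in> carrier_mat n n"
      using la Lsub carrier[OF env_alg.mult[OF la(2) x]] carrier by auto
    have "l = 1\<^sub>m n - a * x"
    proof (rule eq_matI)
      fix i j assume "i < dim_row (1\<^sub>m n - a * x)" "j < dim_col (1\<^sub>m n - a * x)"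
      then show "l $$ (i,j) = (1\<^sub>m n - a * x) $$ (i,j)"
        using arg_cong[OF la(3), of "\<lambda>M. M $$ (i,j)"] lc axc by (simp add: eq_diff_eq)
    qed (use lc axc in auto)
    then have one: "1\<^sub>m n \<in> L" using Lmult b la(1) by metis
    have "c \<in> L" if "c \<in> ?A" for c using Lmult[rule_format, OF that one] carrier[OF that] by simp
    then show False using LA Lsub by blast
  qed
qed

lemma unipotent_monoid_normal_subgroup:
  assumes "normal_subgroup_of n U H" "\<forall>u\<in>U. unipotent_mat n u"
  shows "unipotent_monoid n U"
  using assms unfolding normal_subgroup_of_def subgroup_of_def GL_subgroup_def unipotent_monoid_def
  by auto

lemma normal_subgroup_conj_closed:
  assumes GL: "GL_subgroup n H" and N: "normal_subgroup_of n U H" and h: "h \<in> H"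
  shows "\<exists>h'\<in>carrier_mat n n. h * h' = 1\<^sub>m n \<and> (\<forall>v\<in>U. h' * v * h \<in> U)"
proof -
  have Hc: "H \<subseteq> carrier_mat n n" using GL unfolding GL_subgroup_def by simp
  obtain h' where h': "h' \<in> H" "h * h' = 1\<^sub>m n" "h' * h = 1\<^sub>m n"
    using GL h unfolding GL_subgroup_def by blast
  have "h' * v * h \<in> U" if v: "v \<in> U" for v
  proof -
    have "h' * v \<in> (\<lambda>u. u * h') ` U" using N h'(1) v unfolding normal_subgroup_of_def by blast
    then obtain v' where v': "v' \<in> U" "h' * v = v' * h'" by blast
    have "v' \<in> carrier_mat n n" using v'(1) N Hc unfolding normal_subgroup_of_def subgroup_of_def by auto
    then have "h' * v * h = v'" using v'(2) h'(3) h h'(1) Hc by (simp add: assoc_mult_mat[of v' n n h' n h n] subset_iff)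
    then show ?thesis using v' by simp
  qed
  then show ?thesis using h' Hc by blast
qed

lemma commutator_eq_mult_minus_one:
  assumes U: "unipotent_monoid n U" and g: "g \<in> carrier_mat n n" and h: "h \<in> carrier_mat n n"
    and cosets: "(\<lambda>u. g * h * u) ` U = (\<lambda>u. h * g * u) ` U"
  obtains u where "u \<in> U" "g * h - h * g = (h * g) * (u - 1\<^sub>m n)"
proof -
  have "g * h * 1\<^sub>m n \<in> (\<lambda>u. h * g * u) ` U" using U cosets unfolding unipotent_monoid_def by blast
  then obtain u where u: "u \<in> U" "g * h = h * g * u" using g h by auto
  have "u \<in> carrier_mat n n" using U u(1) unfolding unipotent_monoid_def by auto
  then have "(h * g) * (u - 1\<^sub>m n) = g * h - h * g"
    using mult_minus_distrib_mat[OF mult_carrier_mat[OF h g] _ one_carrier_mat] u(2) h g by simp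
  then show thesis using that u(1) by simp
qed

theorem lemma3p1:
  fixes H :: "'a::field mat set" and n :: nat
  assumes "GL_subgroup n H"
    and "unipotent_by_abelian n H"
    and "g \<in> H" and "h \<in> H"
  shows "g * h - h * g \<in> jacobson_rad n (env_alg n H)"
proof -
  have Hc: "H \<subseteq> carrier_mat n n" using assms(1) unfolding GL_subgroup_def by simp
  obtain U where N: "normal_subgroup_of n U H" and unip: "\<forall>u\<in>U. unipotent_mat n u"
    and cosets: "\<forall>g\<in>H. \<forall>h\<in>H. (\<lambda>u. g * h * u) ` U = (\<lambda>u. h * g * u) ` U"
    using assms(2) unfolding unipotent_by_abelian_def by blast
  have U: "unipotent_monoid n U" using unipotent_monoid_normal_subgroup[OF N unip] .
  have gh: "g \<in> carrier_mat n n" "h \<in> carrier_mat n n" using assms(3,4) Hc by auto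
  obtain u where u: "u \<in> U" and comm: "g * h - h * g = (h * g) * (u - 1\<^sub>m n)"
    using commutator_eq_mult_minus_one[OF U gh bspec[OF bspec[OF cosets assms(3)] assms(4)]] by blast
  have hg: "h * g \<in> env_alg n H" using assms(3,4) by (blast intro: env_alg.mult env_alg.gen)
  have conj: "\<forall>k\<in>H. \<exists>k'\<in>carrier_mat n n. k * k' = 1\<^sub>m n \<and> (\<forall>v\<in>U. k' * v * k \<in> U)"
    using normal_subgroup_conj_closed[OF assms(1) N] by blast
  have "(a * (g * h - h * g)) ^\<^sub>m n = 0\<^sub>m n n" if a: "a \<in> env_alg n H" for a
  proof -
    have "a * (g * h - h * g) = (a * (h * g)) * (u - 1\<^sub>m n)" unfolding comm
      by (rule assoc_mult_mat[OF env_alg_carrier[OF Hc a] mult_carrier_mat[OF gh(2,1)]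
            minus_carrier_mat[OF one_carrier_mat], symmetric])
    then show ?thesis using env_alg_mult_minus_one_nilpotent[OF Hc U conj env_alg.mult[OF a hg] u] by simp
  qed
  moreover have "g * h - h * g \<in> env_alg n H"
    using env_alg_diff[OF Hc] assms(3,4) by (blast intro: env_alg.mult env_alg.gen)
  ultimately show ?thesis using jacobson_rad_env_alg_if_left_multiples_nilpotent[OF Hc] by blast
qed

end
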